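(* Let $n\ge 1$, let $\eta\in\mathbb{C}$, and fix constants $\alpha,\beta,\gamma,\delta\in\mathbb{C}$ with $\alpha\neq 0$. On the space $\mathbb{C}^{4n}$ with coordinates $A_i,B_i,C_i,D_i$ ($i=1,\dots,n$), encoded in the polynomial matrix $$T(\lambda)=\begin{pmatrix}A(\lambda)&B(\lambda)\\ C(\lambda)&D(\lambda)\end{pmatrix}=\begin{pmatrix}\alpha\lambda^n+A_1\lambda^{n-1}+\dots+A_n & \beta\lambda^n+B_1\lambda^{n-1}+\dots+B_n\\ \gamma\lambda^n+C_1\lambda^{n-1}+\dots+C_n & \delta\lambda^n+D_1\lambda^{n-1}+\dots+D_n\end{pmatrix},$$ consider the Sklyanin bracket $\{\cdot,\cdot\}_0$ and the bracket $\{\cdot,\cdot\}_1$ defined in the context below. Then $\{\cdot,\cdot\}_1$ is a Poisson bracket compatible with $\{\cdot,\cdot\}_0$, i.e. every linear combination $a\{\cdot,\cdot\}_0+b\{\cdot,\cdot\}_1$ ($a,b\in\mathbb{C}$) is a Poisson bracket.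
   Context: Brackets are specified by generating functions: for polynomial entries $X(\lambda),Y(\mu)$ of $T$, an identity $\{X(\lambda),Y(\mu)\}=F(\lambda,\mu)$ (with $F$ a polynomial in $\lambda,\mu$ after cancelling the factor $\lambda-\mu$) means that the bracket of the coefficient of $\lambda^{a}$ in $X$ with the coefficient of $\mu^{b}$ in $Y$ equals the coefficient of $\lambda^a\mu^b$ in $F$; the leading coefficients $\alpha,\beta,\gamma,\delta$ are constants; the brackets are extended to all functions by skew-symmetry ($\{Y(\mu),X(\lambda)\}=-\{X(\lambda),Y(\mu)\}$) and the Leibniz rule. The Sklyanin bracket $\{\cdot,\cdot\}_0$ is: $\{A(\lambda),A(\mu)\}_0=\{B(\lambda),B(\mu)\}_0=\{C(\lambda),C(\mu)\}_0=\{D(\lambda),D(\mu)\}_0=0$, $\{B(\lambda),A(\mu)\}_0=\frac{\eta}{\lambda-\mu}(B(\lambda)A(\mu)-B(\mu)A(\lambda))$, $\{C(\lambda),A(\mu)\}_0=\frac{-\eta}{\lambda-\mu}(C(\lambda)A(\mu)-C(\mu)A(\lambda))$, $\{B(\lambda),C(\mu)\}_0=\frac{\eta}{\lambda-\mu}(D(\lambda)A(\mu)-D(\mu)A(\lambda))$, $\{B(\lambda),D(\mu)\}_0=\frac{-\eta}{\lambda-\mu}(B(\lambda)D(\mu)-B(\mu)D(\lambda))$, $\{C(\lambda),D(\mu)\}_0=\frac{\eta}{\lambda-\mu}(C(\lambda)D(\mu)-C(\mu)D(\lambda))$, $\{A(\lambda),D(\mu)\}_0=\frac{\eta}{\lambda-\mu}(C(\lambda)B(\mu)-C(\mu)B(\lambda))$.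 (Equivalently $\{T(\lambda)\otimes I, I\otimes T(\mu)\}_0=[r(\lambda-\mu),T(\lambda)\otimes T(\mu)]$ with $r(\lambda-\mu)=\frac{\eta}{\lambda-\mu}\Pi$, $\Pi$ the $4\times4$ permutation matrix of $\mathbb{C}^2\otimes\mathbb{C}^2$.) The bracket $\{\cdot,\cdot\}_1$ is: $\{A(\lambda),A(\mu)\}_1=\{B(\lambda),B(\mu)\}_1=\{C(\lambda),C(\mu)\}_1=0$, $\{B(\lambda),A(\mu)\}_1=\frac{\eta}{\lambda-\mu}(\lambda B(\lambda)A(\mu)-\mu B(\mu)A(\lambda))-\frac{\eta\beta}{\alpha}A(\lambda)A(\mu)$, $\{C(\lambda),A(\mu)\}_1=\frac{-\eta}{\lambda-\mu}(\lambda C(\lambda)A(\mu)-\mu C(\mu)A(\lambda))+\frac{\eta\gamma}{\alpha}A(\lambda)A(\mu)$, $\{B(\lambda),C(\mu)\}_1=\frac{\eta}{\lambda-\mu}(\lambda D(\lambda)A(\mu)-\mu D(\mu)A(\lambda))-\frac{\eta\delta}{\alpha}A(\lambda)A(\mu)$, $\{B(\lambda),D(\mu)\}_1=\frac{-\eta\lambda}{\lambda-\mu}(B(\lambda)D(\mu)-B(\mu)D(\lambda))+\eta A(\lambda)\left(\frac{\beta}{\alpha}D(\mu)-\frac{\delta}{\alpha}B(\mu)\right)$, $\{C(\lambda),D(\mu)\}_1=\frac{\eta\lambda}{\lambda-\mu}(C(\lambda)D(\mu)-C(\mu)D(\lambda))-\eta A(\lambda)\left(\frac{\gamma}{\alpha}D(\mu)-\frac{\delta}{\alpha}C(\mu)\right)$,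 $\{A(\lambda),D(\mu)\}_1=\frac{\eta\lambda}{\lambda-\mu}(C(\lambda)B(\mu)-C(\mu)B(\lambda))-\eta A(\lambda)\left(\frac{\gamma}{\alpha}B(\mu)-\frac{\beta}{\alpha}C(\mu)\right)$, $\{D(\lambda),D(\mu)\}_1=\frac{\eta\gamma}{\alpha}(D(\lambda)B(\mu)-D(\mu)B(\lambda))-\frac{\eta\beta}{\alpha}(D(\lambda)C(\mu)-D(\mu)C(\lambda))+\frac{\eta\delta}{\alpha}(B(\lambda)C(\mu)-B(\mu)C(\lambda))$. *)

theory Defs
  imports "HOL-Analysis.Analysis"
begin

text \<open>Coordinates of C^(4n): the entry label (A,B,C,D) and an index i in 1..n.
  Points of the space are functions from labels to complex numbers; only the
  labels with 1 <= i <= n matter.\<close>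

datatype ent = EA | EB | EC | ED

type_synonym pt = "ent \<times> nat \<Rightarrow> complex"

definition coords :: "nat \<Rightarrow> (ent \<times> nat) set" where
  "coords n = UNIV \<times> {1..n}"

inductive_set polyfun :: "nat \<Rightarrow> (pt \<Rightarrow> complex) set" for n where
  pf_const: "(\<lambda>x. c) \<in> polyfun n"
| pf_coord: "1 \<le> i \<Longrightarrow> i \<le> n \<Longrightarrow> (\<lambda>x. x (e, i)) \<in> polyfun n"
| pf_add: "f \<in> polyfun n \<Longrightarrow> g \<in> polyfun n \<Longrightarrow> (\<lambda>x. f x + g x) \<in> polyfun n"
| pf_mult: "f \<in> polyfun n \<Longrightarrow> g \<in> polyfun n \<Longrightarrow> (\<lambda>x. f x * g x) \<in> polyfun n"

definition pd :: "ent \<times> nat \<Rightarrow> (pt \<Rightarrow> complex) \<Rightarrow> pt \<Rightarrow> complex" where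
  "pd v f x = deriv (\<lambda>t. f (x(v := t))) (x v)"

text \<open>The bracket determined (via skew-symmetry and the Leibniz rule) by the
  brackets P v w of the coordinate functions: the unique biderivation extending them.\<close>

definition pbr :: "nat \<Rightarrow> (ent \<times> nat \<Rightarrow> ent \<times> nat \<Rightarrow> pt \<Rightarrow> complex)
    \<Rightarrow> (pt \<Rightarrow> complex) \<Rightarrow> (pt \<Rightarrow> complex) \<Rightarrow> pt \<Rightarrow> complex" where
  "pbr n P f g x = (\<Sum>v\<in>coords n. \<Sum>w\<in>coords n. P v w x * pd v f x * pd w g x)"

definition is_poisson :: "nat \<Rightarrow> (ent \<times> nat \<Rightarrow> ent \<times> nat \<Rightarrow> pt \<Rightarrow> complex) \<Rightarrow> bool" where
  "is_poisson n P \<longleftrightarrow>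
     (\<forall>f\<in>polyfun n. \<forall>g\<in>polyfun n.
        pbr n P f g \<in> polyfun n \<and>
        pbr n P f g = (\<lambda>x. - pbr n P g f x) \<and>
        (\<forall>h\<in>polyfun n. \<forall>x.
           pbr n P f (pbr n P g h) x + pbr n P g (pbr n P h f) x
             + pbr n P h (pbr n P f g) x = 0))"

definition entry :: "nat \<Rightarrow> complex \<Rightarrow> ent \<Rightarrow> pt \<Rightarrow> complex \<Rightarrow> complex" where
  "entry n c e x l = c * l ^ n + (\<Sum>i=1..n. x (e, i) * l ^ (n - i))"

text \<open>Generating function {X(l), Y(m)} of the coordinate brackets:
  the bracket of X_i (coefficient of l^(n-i)) with Y_j (coefficient of m^(n-j)).
  Brackets involving the constant leading coefficients are zero.\<close>

definition genbr :: "nat \<Rightarrow> (ent \<times> nat \<Rightarrow> ent \<times> nat \<Rightarrow> pt \<Rightarrow> complex)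
    \<Rightarrow> ent \<Rightarrow> ent \<Rightarrow> pt \<Rightarrow> complex \<Rightarrow> complex \<Rightarrow> complex" where
  "genbr n P X Y x l m = (\<Sum>i=1..n. \<Sum>j=1..n. P (X, i) (Y, j) x * l ^ (n - i) * m ^ (n - j))"

definition skew_on :: "nat \<Rightarrow> (ent \<times> nat \<Rightarrow> ent \<times> nat \<Rightarrow> pt \<Rightarrow> complex) \<Rightarrow> bool" where
  "skew_on n P \<longleftrightarrow> (\<forall>v\<in>coords n. \<forall>w\<in>coords n. \<forall>x. P w v x = - P v w x)"

definition sklyanin0 :: "nat \<Rightarrow> complex \<Rightarrow> complex \<Rightarrow> complex \<Rightarrow> complex \<Rightarrow> complex
    \<Rightarrow> (ent \<times> nat \<Rightarrow> ent \<times> nat \<Rightarrow> pt \<Rightarrow> complex) \<Rightarrow> bool" where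
  "sklyanin0 n \<eta> \<alpha> \<beta> \<gamma> \<delta> P \<longleftrightarrow> skew_on n P \<and>
    (\<forall>x l m. l \<noteq> m \<longrightarrow>
      (let A = entry n \<alpha> EA x; B = entry n \<beta> EB x; C = entry n \<gamma> EC x; D = entry n \<delta> ED x;
           G = genbr n P
       in G EA EA x l m = 0 \<and> G EB EB x l m = 0 \<and> G EC EC x l m = 0 \<and> G ED ED x l m = 0 \<and>
          G EB EA x l m = \<eta> / (l - m) * (B l * A m - B m * A l) \<and>
          G EC EA x l m = - \<eta> / (l - m) * (C l * A m - C m * A l) \<and>
          G EB EC x l m = \<eta> / (l - m) * (D l * A m - D m * A l) \<and>
          G EB ED x l m = - \<eta> / (l - m) * (B l * D m - B m * D l) \<and>
          G EC ED x l m = \<eta> / (l - m) * (C l * D m - C m * D l) \<and>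
          G EA ED x l m = \<eta> / (l - m) * (C l * B m - C m * B l)))"

definition bracket1 :: "nat \<Rightarrow> complex \<Rightarrow> complex \<Rightarrow> complex \<Rightarrow> complex \<Rightarrow> complex
    \<Rightarrow> (ent \<times> nat \<Rightarrow> ent \<times> nat \<Rightarrow> pt \<Rightarrow> complex) \<Rightarrow> bool" where
  "bracket1 n \<eta> \<alpha> \<beta> \<gamma> \<delta> P \<longleftrightarrow> skew_on n P \<and>
    (\<forall>x l m. l \<noteq> m \<longrightarrow>
      (let A = entry n \<alpha> EA x; B = entry n \<beta> EB x; C = entry n \<gamma> EC x; D = entry n \<delta> ED x;
           G = genbr n P
       in G EA EA x l m = 0 \<and> G EB EB x l m = 0 \<and> G EC EC x l m = 0 \<and>
          G EB EA x l m = \<eta> / (l - m) * (l * B l * A m - m * B m * A l)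
                          - \<eta> * \<beta> / \<alpha> * A l * A m \<and>
          G EC EA x l m = - \<eta> / (l - m) * (l * C l * A m - m * C m * A l)
                          + \<eta> * \<gamma> / \<alpha> * A l * A m \<and>
          G EB EC x l m = \<eta> / (l - m) * (l * D l * A m - m * D m * A l)
                          - \<eta> * \<delta> / \<alpha> * A l * A m \<and>
          G EB ED x l m = - \<eta> * l / (l - m) * (B l * D m - B m * D l)
                          + \<eta> * A l * (\<beta> / \<alpha> * D m - \<delta> / \<alpha> * B m) \<and>
          G EC ED x l m = \<eta> * l / (l - m) * (C l * D m - C m * D l)
                          - \<eta> * A l * (\<gamma> / \<alpha> * D m - \<delta> / \<alpha> * C m) \<and>
          G EA ED x l m = \<eta> * l / (l - m) * (C l * B m - C m * B l)
                          - \<eta> * A l * (\<gamma> / \<alpha> * B m - \<beta> / \<alpha> * C m) \<and>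
          G ED ED x l m = \<eta> * \<gamma> / \<alpha> * (D l * B m - D m * B l)
                          - \<eta> * \<beta> / \<alpha> * (D l * C m - D m * C l)
                          + \<eta> * \<delta> / \<alpha> * (B l * C m - B m * C l)))"

end

theory Submission
  imports Defs
begin

text \<open>For both brackets, and hence for every combination \<open>a {.,.}\<^sub>0 + b {.,.}\<^sub>1\<close>, the
  generating function \<open>{X(l), Y(m)}\<close> equals \<open>\<psi>\<^sub>X\<^sub>Y(T(l), T(m), l, m) / (l - m)\<close> with \<open>\<psi>\<close>
  polynomial in the entries of \<open>T(l)\<close> and \<open>T(m)\<close>. By the Leibniz rule the Jacobi identity
  only has to be checked on coordinates, i.e. on the coefficients of
  \<open>{X(l), {Y(m), Z(p)}} + cyclic\<close>. Since \<open>{Y(m), Z(p)}\<close> depends on \<open>x\<close> only through \<open>T(m)\<close> and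
  \<open>T(p)\<close>, the Leibniz rule expresses \<open>{X(l), {Y(m), Z(p)}}\<close> through \<open>\<psi>\<close> again, and the Jacobi
  identity becomes a polynomial identity in the entries of \<open>T(l), T(m), T(p)\<close>, checked entry by
  entry. The structure functions are polynomial, as \<open>is_poisson\<close> requires, because they are
  determined by their generating functions and explicit polynomial solutions exist: their
  coefficients are those of divided differences \<open>(F(l) G(m) - F(m) G(l)) / (l - m)\<close>.\<close>

section \<open>Polynomial functions and partial derivatives\<close>

lemma ent_UNIV: "(UNIV :: ent set) = {EA, EB, EC, ED}"
  by (auto intro: ent.exhaust)

lemma coords_finite [simp]: "finite (coords n)"
  by (simp add: coords_def ent_UNIV)

lemma polyfun_coordI: "v \<in> coords n \<Longrightarrow> (\<lambda>x. x v) \<in> polyfun n"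
  by (cases v) (auto simp: coords_def intro: polyfun.pf_coord)

lemma polyfun_sum:
  "finite S \<Longrightarrow> (\<And>s. s \<in> S \<Longrightarrow> f s \<in> polyfun n) \<Longrightarrow> (\<lambda>x. \<Sum>s\<in>S. f s x) \<in> polyfun n"
proof (induction S rule: finite_induct)
  case empty
  show ?case using polyfun.pf_const[of 0] by simp
next
  case (insert a S)
  then show ?case using polyfun.pf_add[of "f a" n "\<lambda>x. \<Sum>s\<in>S. f s x"] by simp
qed

lemma polyfun_cmult: "f \<in> polyfun n \<Longrightarrow> (\<lambda>x. c * f x) \<in> polyfun n"
  using polyfun.pf_mult[OF polyfun.pf_const] by blast

lemma polyfun_uminus: "f \<in> polyfun n \<Longrightarrow> (\<lambda>x. - f x) \<in> polyfun n"
  using polyfun_cmult[of f n "-1"] by simp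

lemma polyfun_diff: "f \<in> polyfun n \<Longrightarrow> g \<in> polyfun n \<Longrightarrow> (\<lambda>x. f x - g x) \<in> polyfun n"
  using polyfun.pf_add[OF _ polyfun_uminus] by fastforce

lemma polyfun_partial_derivative_exists:
  assumes "f \<in> polyfun n"
  shows "\<exists>f'\<in>polyfun n. \<forall>x t. ((\<lambda>s. f (x(v := s))) has_field_derivative f' (x(v := t))) (at t)"
  using assms
proof (induction rule: polyfun.induct)
  case (pf_const c)
  show ?case by (rule bexI[of _ "\<lambda>x. 0"]) (auto intro: polyfun.pf_const)
next
  case (pf_coord i e)
  show ?case
  proof (rule bexI[of _ "\<lambda>x. if v = (e, i) then 1 else 0"])
    show "\<forall>x t. ((\<lambda>s. (x(v := s)) (e, i)) has_field_derivative (if v = (e, i) then 1 else 0)) (at t)"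
      by (cases "v = (e, i)") auto
  qed (auto intro: polyfun.pf_const)
next
  case (pf_add f g)
  then obtain f' g' where "f' \<in> polyfun n" "g' \<in> polyfun n"
    and df: "\<And>x t. ((\<lambda>s. f (x(v := s))) has_field_derivative f' (x(v := t))) (at t)"
    and dg: "\<And>x t. ((\<lambda>s. g (x(v := s))) has_field_derivative g' (x(v := t))) (at t)" by blast
  then show ?case
    by (intro bexI[of _ "\<lambda>x. f' x + g' x"] allI DERIV_add df dg polyfun.pf_add)
next
  case (pf_mult f g)
  then obtain f' g' where "f' \<in> polyfun n" "g' \<in> polyfun n"
    and df: "\<And>x t. ((\<lambda>s. f (x(v := s))) has_field_derivative f' (x(v := t))) (at t)"
    and dg: "\<And>x t. ((\<lambda>s. g (x(v := s))) has_field_derivative g' (x(v := t))) (at t)" by blast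
  show ?case
  proof (intro bexI[of _ "\<lambda>x. f' x * g x + f x * g' x"] allI)
    fix x t
    show "((\<lambda>s. f (x(v := s)) * g (x(v := s))) has_field_derivative
        f' (x(v := t)) * g (x(v := t)) + f (x(v := t)) * g' (x(v := t))) (at t)"
      using DERIV_mult[OF df dg] by (simp add: algebra_simps)
  qed (use \<open>f' \<in> polyfun n\<close> \<open>g' \<in> polyfun n\<close> pf_mult.hyps in
    \<open>auto intro!: polyfun.pf_add polyfun.pf_mult\<close>)
qed

lemma pd_eqI:
  assumes "\<And>x t. ((\<lambda>s. f (x(v := s))) has_field_derivative g (x(v := t))) (at t)"
  shows "pd v f = g"
proof
  fix y
  have "pd v f y = g (y(v := y v))"
    unfolding pd_def using assms by (intro DERIV_imp_deriv) blast
  then show "pd v f y = g y" by simp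
qed

lemma
  assumes "f \<in> polyfun n"
  shows pd_polyfun: "pd v f \<in> polyfun n"
    and has_field_derivative_pd: "((\<lambda>s. f (x(v := s))) has_field_derivative pd v f (x(v := t))) (at t)"
proof -
  obtain f' where "f' \<in> polyfun n"
    and f': "\<And>x t. ((\<lambda>s. f (x(v := s))) has_field_derivative f' (x(v := t))) (at t)"
    using polyfun_partial_derivative_exists[OF assms] by blast
  moreover have "pd v f = f'" using f' by (rule pd_eqI)
  ultimately show "pd v f \<in> polyfun n"
    and "((\<lambda>s. f (x(v := s))) has_field_derivative pd v f (x(v := t))) (at t)" by auto
qed

lemma pd_const [simp]: "pd v (\<lambda>x. c) = (\<lambda>x. 0)"
  by (rule pd_eqI) auto

lemma pd_coord: "pd v (\<lambda>x. x w) = (\<lambda>x. if v = w then 1 else 0)"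
  by (rule pd_eqI) (cases "v = w"; auto)

lemma pd_add:
  "f \<in> polyfun n \<Longrightarrow> g \<in> polyfun n \<Longrightarrow> pd v (\<lambda>x. f x + g x) = (\<lambda>x. pd v f x + pd v g x)"
  by (rule pd_eqI) (auto intro!: derivative_eq_intros has_field_derivative_pd)

lemma pd_mult:
  "f \<in> polyfun n \<Longrightarrow> g \<in> polyfun n \<Longrightarrow>
    pd v (\<lambda>x. f x * g x) = (\<lambda>x. pd v f x * g x + f x * pd v g x)"
  by (rule pd_eqI) (auto intro!: derivative_eq_intros has_field_derivative_pd)

lemma pd_mult_const: "f \<in> polyfun n \<Longrightarrow> pd v (\<lambda>x. f x * c) = (\<lambda>x. pd v f x * c)"
  using pd_mult[of f n "\<lambda>x. c" v] by (simp add: polyfun.pf_const)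

lemma pd_sum:
  "finite S \<Longrightarrow> (\<And>s. s \<in> S \<Longrightarrow> f s \<in> polyfun n) \<Longrightarrow>
    pd v (\<lambda>x. \<Sum>s\<in>S. f s x) = (\<lambda>x. \<Sum>s\<in>S. pd v (f s) x)"
proof (induction S rule: finite_induct)
  case (insert a S)
  then have "pd v (\<lambda>x. f a x + (\<Sum>s\<in>S. f s x)) = (\<lambda>x. pd v (f a) x + pd v (\<lambda>x. \<Sum>s\<in>S. f s x) x)"
    by (intro pd_add polyfun_sum) auto
  with insert show ?case by simp
qed simp

lemma polyfun_has_field_derivative_line:
  assumes "f \<in> polyfun n"
  shows "((\<lambda>s. f (\<lambda>z. x z + s * c z)) has_field_derivative
           (\<Sum>z\<in>coords n. c z * pd z f (\<lambda>z. x z + t * c z))) (at t)"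
  using assms
proof (induction rule: polyfun.induct)
  case (pf_coord i e)
  then have "(e, i) \<in> coords n" by (simp add: coords_def)
  then have "(\<Sum>z\<in>coords n. c z * pd z (\<lambda>x. x (e, i)) (\<lambda>z. x z + t * c z)) = c (e, i)"
    by (simp add: pd_coord if_distrib cong: if_cong)
  then show ?case by (auto intro!: derivative_eq_intros)
next
  case (pf_add f g)
  then show ?case
    using DERIV_add[OF pf_add.IH] by (simp add: pd_add sum.distrib algebra_simps)
next
  case (pf_mult f g)
  then show ?case
    using DERIV_mult[OF pf_mult.IH]
    by (simp add: pd_mult sum_distrib_left sum_distrib_right sum.distrib algebra_simps)
qed simp

section \<open>Biderivations and the Jacobi identity\<close>

definition jacobiator :: "nat \<Rightarrow> (ent \<times> nat \<Rightarrow> ent \<times> nat \<Rightarrow> pt \<Rightarrow> complex)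
    \<Rightarrow> (pt \<Rightarrow> complex) \<Rightarrow> (pt \<Rightarrow> complex) \<Rightarrow> (pt \<Rightarrow> complex) \<Rightarrow> pt \<Rightarrow> complex" where
  "jacobiator n P f g h x =
     pbr n P f (pbr n P g h) x + pbr n P g (pbr n P h f) x + pbr n P h (pbr n P f g) x"

lemma jacobiator_cycle: "jacobiator n P f g h x = jacobiator n P g h f x"
  unfolding jacobiator_def by (simp add: algebra_simps)

locale poly_bivector =
  fixes n :: nat and P :: "ent \<times> nat \<Rightarrow> ent \<times> nat \<Rightarrow> pt \<Rightarrow> complex"
  assumes polyfun_P: "\<And>v w. v \<in> coords n \<Longrightarrow> w \<in> coords n \<Longrightarrow> P v w \<in> polyfun n"
    and skew_P: "skew_on n P"
begin

abbreviation br where "br \<equiv> pbr n P"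

abbreviation J where "J \<equiv> jacobiator n P"

lemma pbr_polyfun: "f \<in> polyfun n \<Longrightarrow> g \<in> polyfun n \<Longrightarrow> br f g \<in> polyfun n"
  unfolding pbr_def by (intro polyfun_sum polyfun.pf_mult polyfun_P pd_polyfun) auto

lemma pbr_skew: "br f g x = - br g f x"
proof -
  have "br f g x = (\<Sum>w\<in>coords n. \<Sum>v\<in>coords n. P v w x * pd v f x * pd w g x)"
    unfolding pbr_def by (rule sum.swap)
  also have "\<dots> = (\<Sum>w\<in>coords n. \<Sum>v\<in>coords n. - (P w v x * pd w g x * pd v f x))"
  proof (intro sum.cong refl)
    fix w v assume "w \<in> coords n" "v \<in> coords n"
    then have "P v w x = - P w v x" using skew_P unfolding skew_on_def by blast
    then show "P v w x * pd v f x * pd w g x = - (P w v x * pd w g x * pd v f x)" by simp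
  qed
  also have "\<dots> = - br g f x"
    unfolding pbr_def by (simp add: sum_negf)
  finally show ?thesis .
qed

lemma pbr_const_left [simp]: "br (\<lambda>x. c) g = (\<lambda>x. 0)"
  and pbr_const_right [simp]: "br f (\<lambda>x. c) = (\<lambda>x. 0)"
  unfolding pbr_def by simp_all

lemma pbr_add_left:
  "f1 \<in> polyfun n \<Longrightarrow> f2 \<in> polyfun n \<Longrightarrow> br (\<lambda>x. f1 x + f2 x) g = (\<lambda>x. br f1 g x + br f2 g x)"
  and pbr_add_right:
  "f1 \<in> polyfun n \<Longrightarrow> f2 \<in> polyfun n \<Longrightarrow> br g (\<lambda>x. f1 x + f2 x) = (\<lambda>x. br g f1 x + br g f2 x)"
  unfolding pbr_def by (simp_all add: pd_add algebra_simps sum.distrib)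

lemma pbr_mult_left:
  "f1 \<in> polyfun n \<Longrightarrow> f2 \<in> polyfun n \<Longrightarrow>
    br (\<lambda>x. f1 x * f2 x) g = (\<lambda>x. f1 x * br f2 g x + f2 x * br f1 g x)"
  and pbr_mult_right:
  "f1 \<in> polyfun n \<Longrightarrow> f2 \<in> polyfun n \<Longrightarrow>
    br g (\<lambda>x. f1 x * f2 x) = (\<lambda>x. f1 x * br g f2 x + f2 x * br g f1 x)"
  unfolding pbr_def by (simp_all add: pd_mult algebra_simps sum.distrib sum_distrib_left)

lemma pbr_coord_left:
  assumes "u \<in> coords n"
  shows "br (\<lambda>x. x u) h = (\<lambda>x. \<Sum>w\<in>coords n. P u w x * pd w h x)"
proof
  fix x
  have "br (\<lambda>x. x u) h x =
      (\<Sum>v\<in>coords n. if v = u then (\<Sum>w\<in>coords n. P u w x * pd w h x) else 0)"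
    unfolding pbr_def pd_coord by (intro sum.cong refl) (auto simp: sum_distrib_left)
  also have "\<dots> = (\<Sum>w\<in>coords n. P u w x * pd w h x)"
    using assms by simp
  finally show "br (\<lambda>x. x u) h x = (\<Sum>w\<in>coords n. P u w x * pd w h x)" .
qed

lemma pbr_coords: "u \<in> coords n \<Longrightarrow> w \<in> coords n \<Longrightarrow> br (\<lambda>x. x u) (\<lambda>x. x w) = P u w"
  by (simp add: pbr_coord_left pd_coord if_distrib cong: if_cong)

lemma jacobiator_const: "J (\<lambda>x. c) g h x = 0"
  unfolding jacobiator_def by simp

lemma jacobiator_add:
  "f1 \<in> polyfun n \<Longrightarrow> f2 \<in> polyfun n \<Longrightarrow> g \<in> polyfun n \<Longrightarrow> h \<in> polyfun n \<Longrightarrow>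
    J (\<lambda>x. f1 x + f2 x) g h x = J f1 g h x + J f2 g h x"
  unfolding jacobiator_def by (simp add: pbr_add_left pbr_add_right pbr_polyfun)

text \<open>The Jacobiator is a derivation in each argument, so it vanishes once it vanishes
  on coordinate functions.\<close>

lemma jacobiator_mult:
  "f1 \<in> polyfun n \<Longrightarrow> f2 \<in> polyfun n \<Longrightarrow> g \<in> polyfun n \<Longrightarrow> h \<in> polyfun n \<Longrightarrow>
    J (\<lambda>x. f1 x * f2 x) g h x = f1 x * J f2 g h x + f2 x * J f1 g h x"
  unfolding jacobiator_def
  by (simp add: pbr_mult_left pbr_mult_right pbr_add_left pbr_add_right pbr_polyfun polyfun.pf_mult)
    (simp add: pbr_skew[of f2 g x] pbr_skew[of f1 g x] pbr_skew[of h f1 x] pbr_skew[of h f2 x]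
      algebra_simps)

lemma jacobiator_eq_0_if_coord_left:
  assumes coord: "\<And>u x. u \<in> coords n \<Longrightarrow> J (\<lambda>x. x u) g h x = 0"
    and "f \<in> polyfun n" and g: "g \<in> polyfun n" and h: "h \<in> polyfun n"
  shows "J f g h x = 0"
  using assms(2)
proof (induction arbitrary: x rule: polyfun.induct)
  case (pf_const c)
  show ?case by (rule jacobiator_const)
next
  case (pf_coord i e)
  then show ?case using coord by (simp add: coords_def)
next
  case (pf_add f1 f2)
  then show ?case using g h by (simp add: jacobiator_add)
next
  case (pf_mult f1 f2)
  then show ?case using g h by (simp add: jacobiator_mult)
qed

lemma jacobiator_eq_0_if_coords:
  assumes coords: "\<And>u v w x. u \<in> coords n \<Longrightarrow> v \<in> coords n \<Longrightarrow> w \<in> coords n \<Longrightarrow>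
      J (\<lambda>x. x u) (\<lambda>x. x v) (\<lambda>x. x w) x = 0"
    and "f \<in> polyfun n" "g \<in> polyfun n" "h \<in> polyfun n"
  shows "J f g h x = 0"
proof -
  have coords_right: "J f (\<lambda>x. x v) (\<lambda>x. x w) x = 0"
    if "f \<in> polyfun n" "v \<in> coords n" "w \<in> coords n" for f v w x
    by (rule jacobiator_eq_0_if_coord_left) (use that coords polyfun_coordI in auto)
  have coord_middle: "J f (\<lambda>x. x v) h x = 0"
    if "f \<in> polyfun n" "v \<in> coords n" "h \<in> polyfun n" for f v h x
  proof (rule jacobiator_eq_0_if_coord_left)
    fix u x assume "u \<in> coords n"
    then show "J (\<lambda>x. x u) (\<lambda>x. x v) h x = 0"
      using coords_right[OF \<open>h \<in> polyfun n\<close>] that polyfun_coordI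
      by (metis jacobiator_cycle)
  qed (use that polyfun_coordI in auto)
  have coord_left: "J (\<lambda>x. x u) g h x = 0"
    if "u \<in> coords n" "g \<in> polyfun n" "h \<in> polyfun n" for u g h x
    using coord_middle[OF \<open>h \<in> polyfun n\<close> \<open>u \<in> coords n\<close> \<open>g \<in> polyfun n\<close>]
    by (metis jacobiator_cycle)
  show ?thesis
    by (rule jacobiator_eq_0_if_coord_left) (use assms(2-4) coord_left in auto)
qed

lemma jacobiator_coords:
  "u \<in> coords n \<Longrightarrow> v \<in> coords n \<Longrightarrow> w \<in> coords n \<Longrightarrow>
    J (\<lambda>x. x u) (\<lambda>x. x v) (\<lambda>x. x w) x =
     (\<Sum>z\<in>coords n. P u z x * pd z (P v w) x + P v z x * pd z (P w u) x + P w z x * pd z (P u v) x)"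
  unfolding jacobiator_def by (simp add: pbr_coords pbr_coord_left sum.distrib)

lemma is_poisson_if_coord_jacobi:
  assumes "\<And>u v w x. u \<in> coords n \<Longrightarrow> v \<in> coords n \<Longrightarrow> w \<in> coords n \<Longrightarrow>
    (\<Sum>z\<in>coords n. P u z x * pd z (P v w) x + P v z x * pd z (P w u) x + P w z x * pd z (P u v) x) = 0"
  shows "is_poisson n P"
  unfolding is_poisson_def
proof (intro ballI conjI allI)
  fix f g h x
  assume "f \<in> polyfun n" "g \<in> polyfun n" "h \<in> polyfun n"
  then show "br f g \<in> polyfun n" "br f g = (\<lambda>x. - br g f x)"
    using pbr_polyfun pbr_skew by blast+
  show "br f (br g h) x + br g (br h f) x + br h (br f g) x = 0"
    using jacobiator_eq_0_if_coords[of f g h x] assms jacobiator_coords \<open>f \<in> polyfun n\<close>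
      \<open>g \<in> polyfun n\<close> \<open>h \<in> polyfun n\<close>
    unfolding jacobiator_def by simp
qed

end

section \<open>Polynomials vanishing off the diagonals\<close>

lemma sum_reverse_index: "(\<Sum>i=1..(n::nat). h (n - i)) = (\<Sum>k<n. (h k :: 'a::comm_monoid_add))"
  by (rule sum.reindex_bij_witness[of _ "\<lambda>k. n - k" "\<lambda>i. n - i"]) auto

lemma coeff_eq_0_if_vanishes_cofinite:
  fixes c :: "nat \<Rightarrow> complex"
  assumes "finite K" and vanish: "\<And>l. l \<notin> K \<Longrightarrow> (\<Sum>i=1..n. c i * l ^ (n - i)) = 0"
    and "i \<in> {1..n}"
  shows "c i = 0"
proof -
  define d where "d k = (if k < n then c (n - k) else 0)" for k
  have "(\<Sum>k\<le>n. d k * z ^ k) = (\<Sum>i=1..n. c i * z ^ (n - i))" for z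
  proof -
    have "(\<Sum>k\<le>n. d k * z ^ k) = (\<Sum>k<n. c (n - k) * z ^ k)"
      by (simp add: lessThan_Suc_atMost[symmetric] d_def)
    also have "\<dots> = (\<Sum>i=1..n. c (n - (n - i)) * z ^ (n - i))"
      by (rule sum_reverse_index[symmetric])
    also have "\<dots> = (\<Sum>i=1..n. c i * z ^ (n - i))"
      by (intro sum.cong) auto
    finally show ?thesis .
  qed
  with vanish have "- K \<subseteq> {z. (\<Sum>k\<le>n. d k * z ^ k) = 0}" by auto
  moreover have "infinite (- K)"
    using \<open>finite K\<close> by (simp add: Compl_eq_Diff_UNIV infinite_UNIV_char_0)
  ultimately have "infinite {z. (\<Sum>k\<le>n. d k * z ^ k) = 0}"
    using finite_subset by blast
  then have "\<forall>k\<le>n. d k = 0" using polyfun_finite_roots by blast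
  then have "d (n - i) = 0" by simp
  then show ?thesis using \<open>i \<in> {1..n}\<close> by (simp add: d_def)
qed

lemma coeff2_eq_0_if_vanishes_off_diagonal:
  fixes S :: "nat \<Rightarrow> nat \<Rightarrow> complex"
  assumes "\<And>l m. l \<noteq> m \<Longrightarrow> (\<Sum>i=1..n. \<Sum>j=1..n. S i j * l ^ (n - i) * m ^ (n - j)) = 0"
    and "i \<in> {1..n}" "j \<in> {1..n}"
  shows "S i j = 0"
proof -
  have "(\<Sum>j=1..n. S i j * m ^ (n - j)) = 0" for m
  proof (rule coeff_eq_0_if_vanishes_cofinite[of "{m}" "\<lambda>i. \<Sum>j=1..n. S i j * m ^ (n - j)"])
    fix l assume "l \<notin> {m}"
    then show "(\<Sum>i=1..n. (\<Sum>j=1..n. S i j * m ^ (n - j)) * l ^ (n - i)) = 0"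
      using assms(1)[of l m] by (simp add: sum_distrib_right sum_distrib_left mult_ac)
  qed (use assms in auto)
  then show ?thesis
    using coeff_eq_0_if_vanishes_cofinite[of "{}" "S i" n j] assms by auto
qed

definition genpoly3 :: "nat \<Rightarrow> (nat \<Rightarrow> nat \<Rightarrow> nat \<Rightarrow> complex) \<Rightarrow> complex \<Rightarrow> complex \<Rightarrow> complex \<Rightarrow> complex"
  where "genpoly3 n S l m p = (\<Sum>i=1..n. \<Sum>j=1..n. \<Sum>k=1..n. S i j k * l ^ (n - i) * m ^ (n - j) * p ^ (n - k))"

lemma genpoly3_rotate: "genpoly3 n (\<lambda>i j k. S j k i) l m p = genpoly3 n S m p l"
  unfolding genpoly3_def by (subst sum.swap, subst (2) sum.swap) (simp add: mult_ac)

lemma genpoly3_rotate2: "genpoly3 n (\<lambda>i j k. S k i j) l m p = genpoly3 n S p l m"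
  using genpoly3_rotate[of n "\<lambda>i j k. S j k i"] genpoly3_rotate[of n S] by simp

lemma genpoly3_add:
  "genpoly3 n (\<lambda>i j k. S i j k + S' i j k) l m p = genpoly3 n S l m p + genpoly3 n S' l m p"
  unfolding genpoly3_def by (simp add: sum.distrib algebra_simps)

lemma coeff3_eq_0_if_vanishes_off_diagonals:
  fixes S :: "nat \<Rightarrow> nat \<Rightarrow> nat \<Rightarrow> complex"
  assumes "\<And>l m p. l \<noteq> m \<Longrightarrow> m \<noteq> p \<Longrightarrow> l \<noteq> p \<Longrightarrow> genpoly3 n S l m p = 0"
    and "i \<in> {1..n}" "j \<in> {1..n}" "k \<in> {1..n}"
  shows "S i j k = 0"
proof -
  have "(\<Sum>j=1..n. \<Sum>k=1..n. S i j k * m ^ (n - j) * p ^ (n - k)) = 0" if "m \<noteq> p" for m p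
  proof (rule coeff_eq_0_if_vanishes_cofinite[of "{m, p}"
      "\<lambda>i. \<Sum>j=1..n. \<Sum>k=1..n. S i j k * m ^ (n - j) * p ^ (n - k)"])
    fix l assume "l \<notin> {m, p}"
    then show "(\<Sum>i=1..n. (\<Sum>j=1..n. \<Sum>k=1..n. S i j k * m ^ (n - j) * p ^ (n - k)) * l ^ (n - i)) = 0"
      using assms(1)[of l m p] that
      by (simp add: genpoly3_def sum_distrib_right sum_distrib_left mult_ac)
  qed (use assms in auto)
  then show ?thesis
    using coeff2_eq_0_if_vanishes_off_diagonal[of "S i" n j k] assms by auto
qed

section \<open>Generating functions of the brackets\<close>

text \<open>The numerators \<open>(l - m) {X(l), Y(m)}\<close> of the generating functions of the two brackets,
  as functions of the entries \<open>L = T(l)\<close> and \<open>M = T(m)\<close>; in \<open>num1\<close> the parameters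
  \<open>rb, rc, rd\<close> stand for \<open>\<beta>/\<alpha>, \<gamma>/\<alpha>, \<delta>/\<alpha>\<close>.\<close>

definition num0 :: "ent \<Rightarrow> ent \<Rightarrow> (ent \<Rightarrow> complex) \<Rightarrow> (ent \<Rightarrow> complex) \<Rightarrow> complex" where
  "num0 X Y L M = (case (X, Y) of
      (EB, EA) \<Rightarrow> L EB * M EA - M EB * L EA
    | (EA, EB) \<Rightarrow> M EB * L EA - L EB * M EA
    | (EC, EA) \<Rightarrow> - (L EC * M EA - M EC * L EA)
    | (EA, EC) \<Rightarrow> - (M EC * L EA - L EC * M EA)
    | (EB, EC) \<Rightarrow> L ED * M EA - M ED * L EA
    | (EC, EB) \<Rightarrow> M ED * L EA - L ED * M EA
    | (EB, ED) \<Rightarrow> - (L EB * M ED - M EB * L ED)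
    | (ED, EB) \<Rightarrow> - (M EB * L ED - L EB * M ED)
    | (EC, ED) \<Rightarrow> L EC * M ED - M EC * L ED
    | (ED, EC) \<Rightarrow> M EC * L ED - L EC * M ED
    | (EA, ED) \<Rightarrow> L EC * M EB - M EC * L EB
    | (ED, EA) \<Rightarrow> M EC * L EB - L EC * M EB
    | _ \<Rightarrow> 0)"

definition num1 :: "complex \<Rightarrow> complex \<Rightarrow> complex \<Rightarrow> ent \<Rightarrow> ent
    \<Rightarrow> (ent \<Rightarrow> complex) \<Rightarrow> (ent \<Rightarrow> complex) \<Rightarrow> complex \<Rightarrow> complex \<Rightarrow> complex" where
  "num1 rb rc rd X Y L M l m = (case (X, Y) of
      (EB, EA) \<Rightarrow> l * L EB * M EA - m * M EB * L EA - rb * L EA * M EA * (l - m)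
    | (EA, EB) \<Rightarrow> m * M EB * L EA - l * L EB * M EA + rb * L EA * M EA * (l - m)
    | (EC, EA) \<Rightarrow> - (l * L EC * M EA - m * M EC * L EA) + rc * L EA * M EA * (l - m)
    | (EA, EC) \<Rightarrow> - (m * M EC * L EA - l * L EC * M EA) - rc * L EA * M EA * (l - m)
    | (EB, EC) \<Rightarrow> l * L ED * M EA - m * M ED * L EA - rd * L EA * M EA * (l - m)
    | (EC, EB) \<Rightarrow> m * M ED * L EA - l * L ED * M EA + rd * L EA * M EA * (l - m)
    | (EB, ED) \<Rightarrow> - l * (L EB * M ED - M EB * L ED) + L EA * (rb * M ED - rd * M EB) * (l - m)
    | (ED, EB) \<Rightarrow> - m * (M EB * L ED - L EB * M ED) - M EA * (rb * L ED - rd * L EB) * (l - m)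
    | (EC, ED) \<Rightarrow> l * (L EC * M ED - M EC * L ED) - L EA * (rc * M ED - rd * M EC) * (l - m)
    | (ED, EC) \<Rightarrow> m * (M EC * L ED - L EC * M ED) + M EA * (rc * L ED - rd * L EC) * (l - m)
    | (EA, ED) \<Rightarrow> l * (L EC * M EB - M EC * L EB) - L EA * (rc * M EB - rb * M EC) * (l - m)
    | (ED, EA) \<Rightarrow> m * (M EC * L EB - L EC * M EB) + M EA * (rc * L EB - rb * L EC) * (l - m)
    | (ED, ED) \<Rightarrow> (rc * (L ED * M EB - M ED * L EB) - rb * (L ED * M EC - M ED * L EC)
                    + rd * (L EB * M EC - M EB * L EC)) * (l - m)
    | _ \<Rightarrow> 0)"

definition genfun_num :: "complex \<Rightarrow> complex \<Rightarrow> complex \<Rightarrow> complex \<Rightarrow> complex \<Rightarrow> ent \<Rightarrow> ent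
    \<Rightarrow> (ent \<Rightarrow> complex) \<Rightarrow> (ent \<Rightarrow> complex) \<Rightarrow> complex \<Rightarrow> complex \<Rightarrow> complex" where
  "genfun_num a b rb rc rd X Y L M l m = a * num0 X Y L M + b * num1 rb rc rd X Y L M l m"

definition genfun :: "complex \<Rightarrow> complex \<Rightarrow> complex \<Rightarrow> complex \<Rightarrow> complex \<Rightarrow> ent \<Rightarrow> ent
    \<Rightarrow> (ent \<Rightarrow> complex) \<Rightarrow> (ent \<Rightarrow> complex) \<Rightarrow> complex \<Rightarrow> complex \<Rightarrow> complex" where
  "genfun a b rb rc rd X Y L M l m = genfun_num a b rb rc rd X Y L M l m / (l - m)"

lemma fractions_over_differences:
  fixes l m p :: complex
  assumes "l \<noteq> m" "m \<noteq> p" "l \<noteq> p"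
  shows "N1 / (l - m) / (m - p) + N2 / (l - p) / (m - p) + N3 / (m - p) / (p - l)
       + N4 / (m - l) / (p - l) + N5 / (p - l) / (l - m) + N6 / (p - m) / (l - m)
     = (N1 * (p - l) - N2 * (l - m) + N3 * (l - m) - N4 * (m - p) + N5 * (m - p) - N6 * (p - l))
       / ((l - m) * (m - p) * (p - l))"
proof -
  have *: "N1 / u / v + N2 / (- w) / v + N3 / v / w + N4 / (- u) / w + N5 / w / u + N6 / (- v) / u
     = (N1 * w - N2 * u + N3 * u - N4 * v + N5 * v - N6 * w) / (u * v * w)"
    if "u \<noteq> 0" "v \<noteq> 0" "w \<noteq> 0" for u v w :: complex
    using that by (simp add: field_simps)
  have "l - m \<noteq> 0" "m - p \<noteq> 0" "p - l \<noteq> 0" using assms by auto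
  from *[OF this] show ?thesis by (simp only: minus_diff_eq)
qed

locale genfun_params =
  fixes a b rb rc rd :: complex
begin

abbreviation N where "N \<equiv> genfun_num a b rb rc rd"

abbreviation \<psi> where "\<psi> \<equiv> genfun a b rb rc rd"

text \<open>This is \<open>genfun_jacobi\<close> below with the denominators cleared, a polynomial identity in
  the entries of \<open>L, M, P\<close>, checked for each of the 64 triples of entries.\<close>

lemma genfun_num_jacobi:
  "N Y Z (\<lambda>e. N X e L M l m) P m p * (p - l) - N Y Z M (\<lambda>e. N X e L P l p) m p * (l - m)
   + N Z X (\<lambda>e. N Y e M P m p) L p l * (l - m) - N Z X P (\<lambda>e. N Y e M L m l) p l * (m - p)
   + N X Y (\<lambda>e. N Z e P L p l) M l m * (m - p) - N X Y L (\<lambda>e. N Z e P M p m) l m * (p - l) = 0"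
  by (induct X; induct Y; induct Z; simp add: genfun_num_def num0_def num1_def; algebra)

lemma genfun_num_add_left:
    "N X Y (\<lambda>e. L e + L' e) M l m = N X Y L M l m + N X Y L' M l m"
  and genfun_num_add_right:
    "N X Y L (\<lambda>e. M e + M' e) l m = N X Y L M l m + N X Y L M' l m"
  and genfun_num_scale_left: "N X Y (\<lambda>e. c * L e) M l m = c * N X Y L M l m"
  and genfun_num_scale_right: "N X Y L (\<lambda>e. c * M e) l m = c * N X Y L M l m"
  and genfun_num_swap: "N Y X M L m l = N X Y L M l m"
  by (induct X; induct Y; simp add: genfun_num_def num0_def num1_def algebra_simps)+

lemma genfun_swap: "\<psi> Y X M L m l = - \<psi> X Y L M l m"
proof -
  have "N Y X M L m l = N X Y L M l m" by (rule genfun_num_swap)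
  then show ?thesis unfolding genfun_def by (metis minus_diff_eq divide_minus_right)
qed

lemma genfun_quadratic:
  "\<psi> Y Z (\<lambda>e. L e + t * dL e) (\<lambda>e. M e + t * dM e) m p =
   \<psi> Y Z L M m p + t * (\<psi> Y Z dL M m p + \<psi> Y Z L dM m p) + t ^ 2 * \<psi> Y Z dL dM m p"
  unfolding genfun_def genfun_num_add_left genfun_num_add_right genfun_num_scale_left
    genfun_num_scale_right
  by (simp add: algebra_simps add_divide_distrib power2_eq_square)

lemma genfun_jacobi:
  fixes l m p :: complex
  assumes "l \<noteq> m" "m \<noteq> p" "l \<noteq> p"
  shows "(\<psi> Y Z (\<lambda>e. \<psi> X e L M l m) P m p + \<psi> Y Z M (\<lambda>e. \<psi> X e L P l p) m p)
   + (\<psi> Z X (\<lambda>e. \<psi> Y e M P m p) L p l + \<psi> Z X P (\<lambda>e. \<psi> Y e M L m l) p l)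
   + (\<psi> X Y (\<lambda>e. \<psi> Z e P L p l) M l m + \<psi> X Y L (\<lambda>e. \<psi> Z e P M p m) l m) = 0"
proof -
  have div: "N X Y (\<lambda>e. L e / c) M l m = N X Y L M l m / c"
    "N X Y L (\<lambda>e. M e / c) l m = N X Y L M l m / c" for X Y L M l m c
    using genfun_num_scale_left[of X Y "inverse c" L M l m]
      genfun_num_scale_right[of X Y L "inverse c" M l m]
    by (simp_all add: divide_inverse mult.commute)
  show ?thesis
    unfolding genfun_def div add.assoc[symmetric] fractions_over_differences[OF assms]
    using genfun_num_jacobi[of Y Z X L M l m P p] by simp
qed

end

definition T_entry :: "nat \<Rightarrow> complex \<Rightarrow> complex \<Rightarrow> complex \<Rightarrow> complex \<Rightarrow> pt \<Rightarrow> complex \<Rightarrow> ent \<Rightarrow> complex"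
  where "T_entry n \<alpha> \<beta> \<gamma> \<delta> x l e = entry n (case e of EA \<Rightarrow> \<alpha> | EB \<Rightarrow> \<beta> | EC \<Rightarrow> \<gamma> | ED \<Rightarrow> \<delta>) e x l"

lemma T_entry_simps [simp]:
  "T_entry n \<alpha> \<beta> \<gamma> \<delta> x l EA = entry n \<alpha> EA x l" "T_entry n \<alpha> \<beta> \<gamma> \<delta> x l EB = entry n \<beta> EB x l"
  "T_entry n \<alpha> \<beta> \<gamma> \<delta> x l EC = entry n \<gamma> EC x l" "T_entry n \<alpha> \<beta> \<gamma> \<delta> x l ED = entry n \<delta> ED x l"
  by (simp_all add: T_entry_def)

definition has_genfun :: "nat \<Rightarrow> complex \<Rightarrow> complex \<Rightarrow> complex \<Rightarrow> complex
    \<Rightarrow> (ent \<times> nat \<Rightarrow> ent \<times> nat \<Rightarrow> pt \<Rightarrow> complex)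
    \<Rightarrow> complex \<Rightarrow> complex \<Rightarrow> complex \<Rightarrow> complex \<Rightarrow> complex \<Rightarrow> bool" where
  "has_genfun n \<alpha> \<beta> \<gamma> \<delta> P a b rb rc rd \<longleftrightarrow> (\<forall>X Y x l m. l \<noteq> m \<longrightarrow>
     genbr n P X Y x l m =
       genfun a b rb rc rd X Y (T_entry n \<alpha> \<beta> \<gamma> \<delta> x l) (T_entry n \<alpha> \<beta> \<gamma> \<delta> x m) l m)"

lemma genbr_swap:
  assumes "skew_on n P"
  shows "genbr n P Y X x l m = - genbr n P X Y x m l"
proof -
  have "genbr n P Y X x l m = (\<Sum>j=1..n. \<Sum>i=1..n. P (Y, i) (X, j) x * l ^ (n - i) * m ^ (n - j))"
    unfolding genbr_def by (rule sum.swap)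
  also have "\<dots> = (\<Sum>j=1..n. \<Sum>i=1..n. - (P (X, j) (Y, i) x * m ^ (n - j) * l ^ (n - i)))"
  proof (intro sum.cong refl)
    fix j i assume "j \<in> {1..n}" "i \<in> {1..n}"
    then have "P (Y, i) (X, j) x = - P (X, j) (Y, i) x"
      using assms unfolding skew_on_def coords_def by blast
    then show "P (Y, i) (X, j) x * l ^ (n - i) * m ^ (n - j) = - (P (X, j) (Y, i) x * m ^ (n - j) * l ^ (n - i))"
      by simp
  qed
  also have "\<dots> = - genbr n P X Y x m l"
    unfolding genbr_def by (simp add: sum_negf)
  finally show ?thesis .
qed

text \<open>The pairs of entries whose brackets are prescribed in \<open>sklyanin0\<close> and \<open>bracket1\<close>;
  the others follow by skew-symmetry.\<close>

definition prescribed_pairs :: "(ent \<times> ent) set" where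
  "prescribed_pairs =
     {(EA,EA), (EB,EB), (EC,EC), (ED,ED), (EB,EA), (EC,EA), (EB,EC), (EB,ED), (EC,ED), (EA,ED)}"

lemma prescribed_pairs_cover: "(X, Y) \<in> prescribed_pairs \<or> (Y, X) \<in> prescribed_pairs"
  by (induct X; induct Y) (simp_all add: prescribed_pairs_def)

lemma has_genfunI:
  assumes skew: "skew_on n P"
    and prescribed: "\<And>X Y x l m. (X, Y) \<in> prescribed_pairs \<Longrightarrow> l \<noteq> m \<Longrightarrow>
        genbr n P X Y x l m =
          genfun a b rb rc rd X Y (T_entry n \<alpha> \<beta> \<gamma> \<delta> x l) (T_entry n \<alpha> \<beta> \<gamma> \<delta> x m) l m"
  shows "has_genfun n \<alpha> \<beta> \<gamma> \<delta> P a b rb rc rd"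
  unfolding has_genfun_def
proof (intro allI impI)
  fix X Y x l m
  assume lm: "(l::complex) \<noteq> m"
  let ?T = "T_entry n \<alpha> \<beta> \<gamma> \<delta> x"
  show "genbr n P X Y x l m = genfun a b rb rc rd X Y (?T l) (?T m) l m"
  proof (cases "(X, Y) \<in> prescribed_pairs")
    case False
    then have "(Y, X) \<in> prescribed_pairs" using prescribed_pairs_cover by blast
    have "genbr n P X Y x l m = - genbr n P Y X x m l"
      by (rule genbr_swap[OF skew])
    also have "\<dots> = - genfun a b rb rc rd Y X (?T m) (?T l) m l"
      using prescribed[OF \<open>(Y, X) \<in> prescribed_pairs\<close>] lm by simp
    also have "\<dots> = genfun a b rb rc rd X Y (?T l) (?T m) l m"
      by (subst genfun_params.genfun_swap) simp
    finally show ?thesis .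
  qed (use prescribed lm in blast)
qed

lemma sklyanin0_has_genfun:
  assumes "sklyanin0 n \<eta> \<alpha> \<beta> \<gamma> \<delta> P"
  shows "has_genfun n \<alpha> \<beta> \<gamma> \<delta> P \<eta> 0 0 0 0"
proof (rule has_genfunI)
  show "skew_on n P" using assms unfolding sklyanin0_def by blast
next
  fix X Y x l m
  assume "(X, Y) \<in> prescribed_pairs" and lm: "(l::complex) \<noteq> m"
  moreover have "l - m \<noteq> 0" using lm by simp
  ultimately show "genbr n P X Y x l m =
      genfun \<eta> 0 0 0 0 X Y (T_entry n \<alpha> \<beta> \<gamma> \<delta> x l) (T_entry n \<alpha> \<beta> \<gamma> \<delta> x m) l m"
    by (auto simp: assms[unfolded sklyanin0_def Let_def, THEN conjunct2, rule_format, OF lm]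
        prescribed_pairs_def genfun_def genfun_num_def num0_def field_simps)
qed

lemma bracket1_has_genfun:
  assumes "bracket1 n \<eta> \<alpha> \<beta> \<gamma> \<delta> P" and "\<alpha> \<noteq> 0"
  shows "has_genfun n \<alpha> \<beta> \<gamma> \<delta> P 0 \<eta> (\<beta> / \<alpha>) (\<gamma> / \<alpha>) (\<delta> / \<alpha>)"
proof (rule has_genfunI)
  show "skew_on n P" using assms unfolding bracket1_def by blast
next
  fix X Y x l m
  assume "(X, Y) \<in> prescribed_pairs" and lm: "(l::complex) \<noteq> m"
  moreover have "l - m \<noteq> 0" using lm by simp
  ultimately show "genbr n P X Y x l m = genfun 0 \<eta> (\<beta> / \<alpha>) (\<gamma> / \<alpha>) (\<delta> / \<alpha>) X Y
      (T_entry n \<alpha> \<beta> \<gamma> \<delta> x l) (T_entry n \<alpha> \<beta> \<gamma> \<delta> x m) l m"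
    using \<open>\<alpha> \<noteq> 0\<close>
    by (auto simp: assms(1)[unfolded bracket1_def Let_def, THEN conjunct2, rule_format, OF lm]
        prescribed_pairs_def genfun_def genfun_num_def num1_def field_simps)
qed

lemma has_genfun_lincomb:
  assumes "has_genfun n \<alpha> \<beta> \<gamma> \<delta> P0 \<eta> 0 0 0 0" "has_genfun n \<alpha> \<beta> \<gamma> \<delta> P1 0 \<eta> rb rc rd"
  shows "has_genfun n \<alpha> \<beta> \<gamma> \<delta> (\<lambda>v w x. a * P0 v w x + b * P1 v w x) (a * \<eta>) (b * \<eta>) rb rc rd"
proof -
  have "genbr n (\<lambda>v w x. a * P0 v w x + b * P1 v w x) X Y x l m =
      a * genbr n P0 X Y x l m + b * genbr n P1 X Y x l m" for X Y x l m
    unfolding genbr_def by (simp add: sum.distrib sum_distrib_left algebra_simps)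
  with assms show ?thesis
    unfolding has_genfun_def genfun_def genfun_num_def by (simp add: algebra_simps add_divide_distrib)
qed

lemma has_genfun_unique:
  assumes "has_genfun n \<alpha> \<beta> \<gamma> \<delta> P a b rb rc rd" "has_genfun n \<alpha> \<beta> \<gamma> \<delta> Q a b rb rc rd"
    and "v \<in> coords n" "w \<in> coords n"
  shows "P v w = Q v w"
proof
  fix x
  obtain X i Y j where v: "v = (X, i)" "i \<in> {1..n}" and w: "w = (Y, j)" "j \<in> {1..n}"
    using assms(3,4) by (auto simp: coords_def)
  have "P (X, i) (Y, j) x - Q (X, i) (Y, j) x = 0"
  proof (rule coeff2_eq_0_if_vanishes_off_diagonal[of "\<lambda>i j. P (X, i) (Y, j) x - Q (X, i) (Y, j) x"])
    fix l m :: complex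
    assume "l \<noteq> m"
    then have "genbr n P X Y x l m = genbr n Q X Y x l m"
      using assms(1,2) unfolding has_genfun_def by simp
    then show "(\<Sum>i=1..n. \<Sum>j=1..n. (P (X, i) (Y, j) x - Q (X, i) (Y, j) x) * l ^ (n - i) * m ^ (n - j)) = 0"
      unfolding genbr_def by (simp add: algebra_simps sum_subtractf)
  qed (use v w in auto)
  then show "P v w x = Q v w x" using v w by simp
qed

section \<open>The Jacobi identity from the generating functions\<close>

lemma pd_lincomb:
  "finite S \<Longrightarrow> (\<And>s. s \<in> S \<Longrightarrow> f s \<in> polyfun n) \<Longrightarrow>
    pd v (\<lambda>x. \<Sum>s\<in>S. f s x * c s) = (\<lambda>x. \<Sum>s\<in>S. pd v (f s) x * c s)"
proof -
  assume "finite S" and f: "\<And>s. s \<in> S \<Longrightarrow> f s \<in> polyfun n"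
  then have "pd v (\<lambda>x. \<Sum>s\<in>S. f s x * c s) = (\<lambda>x. \<Sum>s\<in>S. pd v (\<lambda>x. f s x * c s) x)"
    by (intro pd_sum polyfun.pf_mult polyfun.pf_const)
  also have "\<dots> = (\<lambda>x. \<Sum>s\<in>S. pd v (f s) x * c s)"
    by (intro ext sum.cong refl) (simp add: pd_mult_const[OF f])
  finally show ?thesis .
qed

lemma T_entry_shift:
  "T_entry n \<alpha> \<beta> \<gamma> \<delta> (\<lambda>z. x z + t * w z) m =
    (\<lambda>e. T_entry n \<alpha> \<beta> \<gamma> \<delta> x m e + t * (\<Sum>r=1..n. w (e, r) * m ^ (n - r)))"
  unfolding T_entry_def entry_def by (simp add: algebra_simps sum.distrib sum_distrib_left)

lemma sum_mult_double_sum_reorder: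
  "(\<Sum>z\<in>Z. (\<Sum>i\<in>I. a z i) * (\<Sum>j\<in>J. \<Sum>k\<in>K. b z j k)) =
    (\<Sum>i\<in>I. \<Sum>j\<in>J. \<Sum>k\<in>K. \<Sum>z\<in>Z. a z i * (b z j k :: 'a::comm_semiring_0))"
proof -
  have "(\<Sum>z\<in>Z. (\<Sum>i\<in>I. a z i) * (\<Sum>j\<in>J. \<Sum>k\<in>K. b z j k)) =
      (\<Sum>i\<in>I. \<Sum>z\<in>Z. \<Sum>j\<in>J. \<Sum>k\<in>K. a z i * b z j k)"
    unfolding sum_product by (subst sum.swap) (simp add: sum_distrib_left)
  also have "\<dots> = (\<Sum>i\<in>I. \<Sum>j\<in>J. \<Sum>k\<in>K. \<Sum>z\<in>Z. a z i * b z j k)"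
    by (intro sum.cong refl) (subst sum.swap, intro sum.cong refl sum.swap)
  finally show ?thesis .
qed

locale genfun_bivector = poly_bivector + genfun_params +
  fixes \<alpha> \<beta> \<gamma> \<delta> :: complex
  assumes has_genfun: "has_genfun n \<alpha> \<beta> \<gamma> \<delta> P a b rb rc rd"
begin

abbreviation T where "T \<equiv> T_entry n \<alpha> \<beta> \<gamma> \<delta>"

lemma genbr_eq: "l \<noteq> m \<Longrightarrow> genbr n P X Y x l m = \<psi> X Y (T x l) (T x m) l m"
  using has_genfun unfolding has_genfun_def by blast

lemma polyfun_P_entries: "j \<in> {1..n} \<Longrightarrow> k \<in> {1..n} \<Longrightarrow> P (Y, j) (Z, k) \<in> polyfun n"
  by (rule polyfun_P) (auto simp: coords_def)

lemma genbr_as_lincomb: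
  "genbr n P Y Z x m p = (\<Sum>j=1..n. (\<Sum>k=1..n. P (Y, j) (Z, k) x * p ^ (n - k)) * m ^ (n - j))"
  unfolding genbr_def by (simp add: sum_distrib_left sum_distrib_right mult_ac)

lemma genbr_polyfun: "(\<lambda>x. genbr n P Y Z x m p) \<in> polyfun n"
  unfolding genbr_as_lincomb
  by (intro polyfun_sum polyfun.pf_mult polyfun_P_entries polyfun.pf_const) auto

lemma pd_genbr:
  "pd z (\<lambda>x. genbr n P Y Z x m p) x =
    (\<Sum>j=1..n. \<Sum>k=1..n. pd z (P (Y, j) (Z, k)) x * m ^ (n - j) * p ^ (n - k))"
proof -
  have "pd z (\<lambda>x. genbr n P Y Z x m p) =
      (\<lambda>x. \<Sum>j=1..n. pd z (\<lambda>x. \<Sum>k=1..n. P (Y, j) (Z, k) x * p ^ (n - k)) x * m ^ (n - j))"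
    unfolding genbr_as_lincomb
    by (intro pd_lincomb[where n = n] polyfun_sum polyfun.pf_mult polyfun_P_entries polyfun.pf_const)
      auto
  also have "\<dots> = (\<lambda>x. \<Sum>j=1..n. (\<Sum>k=1..n. pd z (P (Y, j) (Z, k)) x * p ^ (n - k)) * m ^ (n - j))"
  proof (intro ext sum.cong refl arg_cong2[where f = "(*)"])
    fix x j
    assume "j \<in> {1..n}"
    then have "pd z (\<lambda>x. \<Sum>k=1..n. P (Y, j) (Z, k) x * p ^ (n - k)) =
        (\<lambda>x. \<Sum>k=1..n. pd z (P (Y, j) (Z, k)) x * p ^ (n - k))"
      by (intro pd_lincomb[where n = n] polyfun_P_entries) auto
    then show "pd z (\<lambda>x. \<Sum>k=1..n. P (Y, j) (Z, k) x * p ^ (n - k)) x =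
        (\<Sum>k=1..n. pd z (P (Y, j) (Z, k)) x * p ^ (n - k))" by simp
  qed
  finally show ?thesis by (simp add: sum_distrib_left sum_distrib_right mult_ac)
qed

text \<open>The sum over
  \<open>z\<close> is the derivative of \<open>{Y(m), Z(p)}\<close> along the Hamiltonian vector field \<open>c\<close> of \<open>X(l)\<close>;
  along the line \<open>x + t c\<close> the entries of \<open>T(m)\<close> and \<open>T(p)\<close> move with velocities
  \<open>{X(l), T(m)}\<close> and \<open>{X(l), T(p)}\<close>, so the Leibniz rule for \<open>\<psi>\<close> gives the result.\<close>

lemma genpoly3_double_bracket:
  fixes l m p :: complex
  assumes lm: "l \<noteq> m" and mp: "m \<noteq> p" and lp: "l \<noteq> p"
  shows "genpoly3 n (\<lambda>i j k. \<Sum>z\<in>coords n. P (X, i) z x * pd z (P (Y, j) (Z, k)) x) l m p =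
    \<psi> Y Z (\<lambda>e. \<psi> X e (T x l) (T x m) l m) (T x p) m p + \<psi> Y Z (T x m) (\<lambda>e. \<psi> X e (T x l) (T x p) l p) m p"
    (is "_ = ?K1")
proof -
  define c where "c z = (\<Sum>i=1..n. P (X, i) z x * l ^ (n - i))" for z
  define G where "G y = genbr n P Y Z y m p" for y
  have "genpoly3 n (\<lambda>i j k. \<Sum>z\<in>coords n. P (X, i) z x * pd z (P (Y, j) (Z, k)) x) l m p =
      (\<Sum>z\<in>coords n. c z * pd z G x)" (is "_ = ?D")
    unfolding genpoly3_def c_def G_def[abs_def] pd_genbr sum_mult_double_sum_reorder
    by (simp add: sum_distrib_left sum_distrib_right mult_ac)
  moreover have "((\<lambda>t. G (\<lambda>z. x z + t * c z)) has_field_derivative ?D) (at 0)"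
    using polyfun_has_field_derivative_line[OF genbr_polyfun, where x = x and c = c and t = 0]
    unfolding G_def[abs_def] by simp
  moreover have "((\<lambda>t. G (\<lambda>z. x z + t * c z)) has_field_derivative ?K1) (at 0)"
  proof -
    have velocity: "(\<Sum>r=1..n. c (e, r) * q ^ (n - r)) = genbr n P X e x l q" for e q
      unfolding c_def genbr_def sum_distrib_right by (subst sum.swap) (simp add: mult_ac)
    define K0 where "K0 = \<psi> Y Z (T x m) (T x p) m p"
    define K2 where "K2 = \<psi> Y Z (\<lambda>e. \<psi> X e (T x l) (T x m) l m) (\<lambda>e. \<psi> X e (T x l) (T x p) l p) m p"
    have "(\<lambda>t. G (\<lambda>z. x z + t * c z)) = (\<lambda>t. K0 + t * ?K1 + t ^ 2 * K2)"
      unfolding G_def genbr_eq[OF mp] T_entry_shift velocity genbr_eq[OF lm] genbr_eq[OF lp]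
        K0_def K2_def genfun_quadratic ..
    moreover have "((\<lambda>t. K0 + t * K1 + t ^ 2 * K2) has_field_derivative K1) (at 0)" for K1
      by (auto intro!: derivative_eq_intros)
    ultimately show ?thesis by simp
  qed
  ultimately show ?thesis using DERIV_unique[of _ ?D 0 ?K1] by simp
qed

lemma coord_jacobi:
  assumes "u \<in> coords n" "v \<in> coords n" "w \<in> coords n"
  shows "(\<Sum>z\<in>coords n. P u z x * pd z (P v w) x + P v z x * pd z (P w u) x + P w z x * pd z (P u v) x) = 0"
proof -
  obtain X i Y j Z k where u: "u = (X, i)" "i \<in> {1..n}" and v: "v = (Y, j)" "j \<in> {1..n}"
    and w: "w = (Z, k)" "k \<in> {1..n}"
    using assms by (auto simp: coords_def)
  define F where "F X Y Z i j k = (\<Sum>z\<in>coords n. P (X, i) z x * pd z (P (Y, j) (Z, k)) x)"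
    for X Y Z i j k
  have "F X Y Z i j k + F Y Z X j k i + F Z X Y k i j = 0"
  proof (rule coeff3_eq_0_if_vanishes_off_diagonals
      [where S = "\<lambda>i j k. F X Y Z i j k + F Y Z X j k i + F Z X Y k i j"])
    fix l m p :: complex
    assume "l \<noteq> m" "m \<noteq> p" "l \<noteq> p"
    then have "m \<noteq> l" "p \<noteq> m" "p \<noteq> l" by auto
    have "genpoly3 n (\<lambda>i j k. F X Y Z i j k + F Y Z X j k i + F Z X Y k i j) l m p =
        genpoly3 n (F X Y Z) l m p + genpoly3 n (F Y Z X) m p l + genpoly3 n (F Z X Y) p l m"
      by (simp only: genpoly3_add genpoly3_rotate[where S = "F Y Z X"]
          genpoly3_rotate2[where S = "F Z X Y"])
    also have "\<dots> = 0"
      unfolding F_def[abs_def]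
      using genfun_jacobi
        [where X = X and Y = Y and Z = Z and L = "T x l" and M = "T x m" and P = "T x p"]
      by (simp add: genpoly3_double_bracket \<open>l \<noteq> m\<close> \<open>m \<noteq> p\<close> \<open>l \<noteq> p\<close> \<open>m \<noteq> l\<close>
          \<open>p \<noteq> m\<close> \<open>p \<noteq> l\<close>)
    finally show "genpoly3 n (\<lambda>i j k. F X Y Z i j k + F Y Z X j k i + F Z X Y k i j) l m p = 0" .
  qed (use u v w in auto)
  then show ?thesis
    using u v w by (simp add: F_def sum.distrib)
qed

lemma is_poisson: "is_poisson n P"
  using coord_jacobi by (rule is_poisson_if_coord_jacobi)

end

section \<open>Explicit solutions and polynomiality\<close>

text \<open>\<open>quot_coeff a b p q\<close> is the coefficient of \<open>l\<^sup>p m\<^sup>q\<close> in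
  \<open>(l\<^sup>a m\<^sup>b - l\<^sup>b m\<^sup>a) / (l - m) = l\<^sup>b m\<^sup>b (l\<^sup>a\<^sup>-\<^sup>b - m\<^sup>a\<^sup>-\<^sup>b) / (l - m)\<close> for \<open>a > b\<close>.\<close>

definition quot_coeff :: "nat \<Rightarrow> nat \<Rightarrow> nat \<Rightarrow> nat \<Rightarrow> complex" where
  "quot_coeff a b p q = (if p + q + 1 = a + b \<and> b \<le> p \<and> b \<le> q then 1 else 0)"

lemma quot_coeff_eq_0: "a \<le> b \<Longrightarrow> quot_coeff a b p q = 0"
  unfolding quot_coeff_def by auto

lemma quot_coeff_row_sum:
  fixes l m :: complex
  assumes "b < a" "a \<le> N"
  shows "(\<Sum>q<N. quot_coeff a b p q * l ^ p * m ^ q) =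
    (if p \<in> {b..<a} then l ^ p * m ^ (a + b - 1 - p) else 0)"
proof -
  have "(\<Sum>q<N. quot_coeff a b p q * l ^ p * m ^ q) =
      (\<Sum>q<N. if q = a + b - 1 - p then (if b \<le> p \<and> p < a then l ^ p * m ^ q else 0) else 0)"
    using assms(1) by (intro sum.cong refl) (auto simp: quot_coeff_def)
  then show ?thesis using assms by auto
qed

lemma quot_coeff_sum:
  fixes l m :: complex
  assumes "b < a" "a \<le> N"
  shows "(l - m) * (\<Sum>p<N. \<Sum>q<N. quot_coeff a b p q * l ^ p * m ^ q) = l ^ a * m ^ b - l ^ b * m ^ a"
proof -
  have "(\<Sum>p<N. \<Sum>q<N. quot_coeff a b p q * l ^ p * m ^ q) = (\<Sum>p\<in>{b..<a}. l ^ p * m ^ (a + b - 1 - p))"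
  proof -
    have "{..<N} \<inter> {p. b \<le> p \<and> p < a} = {b..<a}" using assms by auto
    with assms show ?thesis by (simp add: quot_coeff_row_sum sum.If_cases)
  qed
  also have "\<dots> = (\<Sum>s<a - b. l ^ (b + s) * m ^ (a + b - 1 - (b + s)))"
    using sum.atLeastLessThan_shift_0[of "\<lambda>p. l ^ p * m ^ (a + b - 1 - p)" b a]
    by (simp add: comp_def lessThan_atLeast0)
  also have "\<dots> = l ^ b * m ^ b * (\<Sum>s<a - b. m ^ (a - b - Suc s) * l ^ s)"
    unfolding sum_distrib_left
  proof (intro sum.cong refl)
    fix s assume "s \<in> {..<a - b}"
    then have "a + b - 1 - (b + s) = b + (a - b - Suc s)" using assms by auto
    then show "l ^ (b + s) * m ^ (a + b - 1 - (b + s)) = l ^ b * m ^ b * (m ^ (a - b - Suc s) * l ^ s)"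
      by (simp add: power_add)
  qed
  finally have "(l - m) * (\<Sum>p<N. \<Sum>q<N. quot_coeff a b p q * l ^ p * m ^ q) =
      l ^ b * m ^ b * (l ^ (a - b) - m ^ (a - b))"
    by (simp add: power_diff_sumr2 algebra_simps)
  also have "\<dots> = l ^ a * m ^ b - l ^ b * m ^ a"
    using assms by (simp add: power_add[symmetric] algebra_simps)
  finally show ?thesis .
qed

lemma quot_coeff_antisym_sum:
  fixes l m :: complex
  assumes "a \<le> N" "b \<le> N"
  shows "(l - m) * (\<Sum>p<N. \<Sum>q<N. (quot_coeff a b p q - quot_coeff b a p q) * l ^ p * m ^ q) =
    l ^ a * m ^ b - l ^ b * m ^ a"
proof (cases a b rule: linorder_cases)
  case less
  then show ?thesis
    using quot_coeff_sum[OF less assms(2), of l m]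
    by (simp add: quot_coeff_eq_0 sum_negf algebra_simps)
next
  case greater
  then show ?thesis
    using quot_coeff_sum[OF greater assms(1), of l m] by (simp add: quot_coeff_eq_0)
qed simp

text \<open>The coefficients of the divided difference \<open>(F(l) G(m) - F(m) G(l)) / (l - m)\<close> of two
  polynomials of degree at most \<open>N\<close> with coefficients \<open>f\<close> and \<open>g\<close>.\<close>

definition divdiff_coeff :: "nat \<Rightarrow> (nat \<Rightarrow> complex) \<Rightarrow> (nat \<Rightarrow> complex) \<Rightarrow> nat \<Rightarrow> nat \<Rightarrow> complex" where
  "divdiff_coeff N f g p q = (\<Sum>a\<le>N. \<Sum>b\<le>N. f a * g b * (quot_coeff a b p q - quot_coeff b a p q))"

lemma divdiff_coeff_sum:
  fixes l m :: complex
  shows "(l - m) * (\<Sum>p<N. \<Sum>q<N. divdiff_coeff N f g p q * l ^ p * m ^ q) =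
    (\<Sum>a\<le>N. f a * l ^ a) * (\<Sum>b\<le>N. g b * m ^ b) - (\<Sum>a\<le>N. f a * m ^ a) * (\<Sum>b\<le>N. g b * l ^ b)"
proof -
  have swap: "(\<Sum>p<N. \<Sum>q<N. \<Sum>a\<le>N. \<Sum>b\<le>N. h p q a b) = (\<Sum>a\<le>N. \<Sum>b\<le>N. \<Sum>p<N. \<Sum>q<N. h p q a b)"
    for h :: "nat \<Rightarrow> nat \<Rightarrow> nat \<Rightarrow> nat \<Rightarrow> complex"
    by (simp only: sum.swap[of _ "{..<N}" "{..N}"])
  have "(l - m) * (\<Sum>p<N. \<Sum>q<N. divdiff_coeff N f g p q * l ^ p * m ^ q) =
     (\<Sum>a\<le>N. \<Sum>b\<le>N. f a * g b *
        ((l - m) * (\<Sum>p<N. \<Sum>q<N. (quot_coeff a b p q - quot_coeff b a p q) * l ^ p * m ^ q)))"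
    unfolding divdiff_coeff_def sum_distrib_right sum_distrib_left swap by (simp add: mult_ac)
  also have "\<dots> = (\<Sum>a\<le>N. \<Sum>b\<le>N. f a * g b * (l ^ a * m ^ b - l ^ b * m ^ a))"
    by (simp add: quot_coeff_antisym_sum)
  also have "\<dots> = (\<Sum>a\<le>N. f a * l ^ a) * (\<Sum>b\<le>N. g b * m ^ b) - (\<Sum>a\<le>N. f a * m ^ a) * (\<Sum>b\<le>N. g b * l ^ b)"
    by (simp add: sum_product algebra_simps sum_subtractf)
  finally show ?thesis .
qed

lemma divdiff_coeff_eq_0: "N \<le> q \<Longrightarrow> divdiff_coeff N f g p q = 0"
  unfolding divdiff_coeff_def quot_coeff_def by (intro sum.neutral ballI) auto

lemma double_sum_delta:
  "finite A \<Longrightarrow> finite B \<Longrightarrow> (\<Sum>a\<in>A. \<Sum>b\<in>B. if a = a0 \<and> b = b0 then h a b else 0) =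
    (if a0 \<in> A \<and> b0 \<in> B then h a0 b0 else 0)"
proof -
  assume "finite A" "finite B"
  moreover have "(\<Sum>a\<in>A. \<Sum>b\<in>B. if a = a0 \<and> b = b0 then h a b else 0) =
      (\<Sum>a\<in>A. if a = a0 then (\<Sum>b\<in>B. if b = b0 then h a b else 0) else 0)"
    by (intro sum.cong) auto
  ultimately show ?thesis by simp
qed

lemma divdiff_coeff_top:
  assumes "1 \<le> N" "q < N"
  shows "divdiff_coeff N f g (N - 1) q = f N * g q - f q * g N"
proof -
  have "divdiff_coeff N f g (N - 1) q = (\<Sum>a\<le>N. \<Sum>b\<le>N. if a = N \<and> b = q then f a * g b else 0)
      - (\<Sum>a\<le>N. \<Sum>b\<le>N. if a = q \<and> b = N then f a * g b else 0)"
    unfolding divdiff_coeff_def quot_coeff_def using assms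
    by (simp add: sum_subtractf[symmetric] right_diff_distrib, intro sum.cong refl) auto
  also have "\<dots> = f N * g q - f q * g N"
    using assms by (simp add: double_sum_delta)
  finally show ?thesis .
qed

definition entry_coeff :: "nat \<Rightarrow> complex \<Rightarrow> ent \<Rightarrow> pt \<Rightarrow> nat \<Rightarrow> complex" where
  "entry_coeff n c e x a = (if a = n then c else if a < n then x (e, n - a) else 0)"

lemma entry_coeff_top [simp]: "entry_coeff n c e x n = c"
  by (simp add: entry_coeff_def)

lemma entry_eq_coeff_sum: "entry n c e x l = (\<Sum>a\<le>n. entry_coeff n c e x a * l ^ a)"
proof -
  have "(\<Sum>a\<le>n. entry_coeff n c e x a * l ^ a) = (\<Sum>a<n. x (e, n - a) * l ^ a) + c * l ^ n"
    by (simp add: lessThan_Suc_atMost[symmetric] entry_coeff_def)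
  also have "(\<Sum>a<n. x (e, n - a) * l ^ a) = (\<Sum>i=1..n. x (e, n - (n - i)) * l ^ (n - i))"
    by (rule sum_reverse_index[symmetric])
  also have "\<dots> = (\<Sum>i=1..n. x (e, i) * l ^ (n - i))"
    by (intro sum.cong) auto
  finally show ?thesis unfolding entry_def by simp
qed

lemma polyfun_entry_coeff: "(\<lambda>x. entry_coeff n c e x a) \<in> polyfun n"
proof (cases "a < n")
  case True
  then have "(\<lambda>x. entry_coeff n c e x a) = (\<lambda>x. x (e, n - a))" by (auto simp: entry_coeff_def)
  with True show ?thesis by (auto intro: polyfun.pf_coord)
next
  case False
  then have "(\<lambda>x. entry_coeff n c e x a) = (\<lambda>x. if a = n then c else 0)" by (auto simp: entry_coeff_def)
  then show ?thesis by (simp add: polyfun.pf_const)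
qed

lemma polyfun_divdiff_coeff:
  "(\<lambda>x. divdiff_coeff n (entry_coeff n c1 e1 x) (entry_coeff n c2 e2 x) p q) \<in> polyfun n"
  unfolding divdiff_coeff_def
  by (intro polyfun_sum polyfun.pf_mult polyfun_entry_coeff polyfun.pf_const) auto

lemma divdiff_entry_sum:
  assumes "l \<noteq> m"
  shows "(\<Sum>p<n. \<Sum>q<n. c * divdiff_coeff n (entry_coeff n c1 e1 x) (entry_coeff n c2 e2 x) p q * l ^ p * m ^ q)
    = c / (l - m) * (entry n c1 e1 x l * entry n c2 e2 x m - entry n c1 e1 x m * entry n c2 e2 x l)"
proof -
  have "(\<Sum>p<n. \<Sum>q<n. c * divdiff_coeff n (entry_coeff n c1 e1 x) (entry_coeff n c2 e2 x) p q * l ^ p * m ^ q)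
      = c * (\<Sum>p<n. \<Sum>q<n. divdiff_coeff n (entry_coeff n c1 e1 x) (entry_coeff n c2 e2 x) p q * l ^ p * m ^ q)"
    by (simp add: sum_distrib_left mult_ac)
  also have "(\<Sum>p<n. \<Sum>q<n. divdiff_coeff n (entry_coeff n c1 e1 x) (entry_coeff n c2 e2 x) p q * l ^ p * m ^ q)
     = (entry n c1 e1 x l * entry n c2 e2 x m - entry n c1 e1 x m * entry n c2 e2 x l) / (l - m)"
    using divdiff_coeff_sum[of l m n "entry_coeff n c1 e1 x" "entry_coeff n c2 e2 x"] assms
    unfolding entry_eq_coeff_sum by (simp add: eq_divide_eq mult.commute)
  finally show ?thesis by simp
qed

lemma double_sum_lessThan_eq_atMost:
  fixes c :: "nat \<Rightarrow> nat \<Rightarrow> complex"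
  assumes "\<And>p q. p \<le> n \<Longrightarrow> q \<le> n \<Longrightarrow> p = n \<or> q = n \<Longrightarrow> c p q = 0"
  shows "(\<Sum>p<n. \<Sum>q<n. c p q * l ^ p * m ^ q) = (\<Sum>p\<le>n. \<Sum>q\<le>n. c p q * l ^ p * m ^ q)"
  using assms by (simp add: lessThan_Suc_atMost[symmetric])

lemma wedge_eq_double_sum:
  "(\<Sum>a\<le>n. f a * l ^ a) * (\<Sum>b\<le>n. g b * m ^ b) - (\<Sum>a\<le>n. f a * m ^ a) * (\<Sum>b\<le>n. g b * (l::complex) ^ b)
    = (\<Sum>p\<le>n. \<Sum>q\<le>n. (f p * g q - f q * g p) * l ^ p * m ^ q)"
proof -
  have "(\<Sum>a\<le>n. f a * m ^ a) * (\<Sum>b\<le>n. g b * l ^ b) = (\<Sum>b\<le>n. \<Sum>a\<le>n. f a * m ^ a * (g b * l ^ b))"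
    unfolding sum_product by (rule sum.swap)
  then show ?thesis
    by (simp add: sum_product sum_subtractf[symmetric] algebra_simps)
qed

text \<open>The coefficients of \<open>s l (F(l) G(m) - F(m) G(l)) / (l - m) + U(l) H(m)\<close>, the shape of
  the generating functions of \<open>{.,.}\<^sub>1\<close>.\<close>

definition bracket1_coeff :: "nat \<Rightarrow> complex \<Rightarrow> (nat \<Rightarrow> complex) \<Rightarrow> (nat \<Rightarrow> complex)
    \<Rightarrow> (nat \<Rightarrow> complex) \<Rightarrow> (nat \<Rightarrow> complex) \<Rightarrow> nat \<Rightarrow> nat \<Rightarrow> complex" where
  "bracket1_coeff n s f g u h p q = s * (if 1 \<le> p then divdiff_coeff n f g (p - 1) q else 0) + u p * h q"

lemma divdiff_coeff_shift_sum:
  "(\<Sum>p\<le>n. \<Sum>q\<le>n. (if 1 \<le> p then divdiff_coeff n f g (p - 1) q else 0) * l ^ p * m ^ q)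
    = l * (\<Sum>p<n. \<Sum>q<n. divdiff_coeff n f g p q * l ^ p * m ^ q)"
proof -
  have "(\<Sum>p\<le>n. \<Sum>q\<le>n. (if 1 \<le> p then divdiff_coeff n f g (p - 1) q else 0) * l ^ p * m ^ q)
      = (\<Sum>p<n. \<Sum>q\<le>n. divdiff_coeff n f g p q * l ^ Suc p * m ^ q)"
    unfolding lessThan_Suc_atMost[symmetric] sum.lessThan_Suc_shift by simp
  also have "\<dots> = (\<Sum>p<n. \<Sum>q<n. divdiff_coeff n f g p q * l ^ Suc p * m ^ q)"
    by (rule sum.cong[OF refl]) (simp add: lessThan_Suc_atMost[symmetric] divdiff_coeff_eq_0)
  finally show ?thesis by (simp add: sum_distrib_left mult_ac)
qed

lemma bracket1_coeff_boundary:
  assumes "1 \<le> n" "h n = 0"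
    and top: "\<And>q. q < n \<Longrightarrow> s * (f n * g q - f q * g n) + u n * h q = 0"
    and "p \<le> n" "q \<le> n" "p = n \<or> q = n"
  shows "bracket1_coeff n s f g u h p q = 0"
proof (cases "q = n")
  case True
  then show ?thesis using assms(2) by (simp add: bracket1_coeff_def divdiff_coeff_eq_0)
next
  case False
  then have "p = n" "q < n" using assms(5,6) by auto
  then show ?thesis
    using divdiff_coeff_top[OF assms(1), of q f g] top[of q] assms(1) by (simp add: bracket1_coeff_def)
qed

lemma bracket1_coeff_sum:
  fixes f g u h :: "nat \<Rightarrow> complex" and l m s :: complex
  assumes lm: "l \<noteq> m" and n: "1 \<le> n" and hn: "h n = 0"
    and top: "\<And>q. q < n \<Longrightarrow> s * (f n * g q - f q * g n) + u n * h q = 0"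
  shows "(\<Sum>p<n. \<Sum>q<n. bracket1_coeff n s f g u h p q * l ^ p * m ^ q) =
    s * l / (l - m) * ((\<Sum>a\<le>n. f a * l ^ a) * (\<Sum>b\<le>n. g b * m ^ b) - (\<Sum>a\<le>n. f a * m ^ a) * (\<Sum>b\<le>n. g b * l ^ b))
      + (\<Sum>p\<le>n. u p * l ^ p) * (\<Sum>q\<le>n. h q * m ^ q)"
proof -
  have "(\<Sum>p<n. \<Sum>q<n. bracket1_coeff n s f g u h p q * l ^ p * m ^ q) =
      (\<Sum>p\<le>n. \<Sum>q\<le>n. bracket1_coeff n s f g u h p q * l ^ p * m ^ q)"
    by (intro double_sum_lessThan_eq_atMost bracket1_coeff_boundary[where f = f and g = g and u = u]
        n hn top)
  also have "\<dots> = s * (\<Sum>p\<le>n. \<Sum>q\<le>n. (if 1 \<le> p then divdiff_coeff n f g (p - 1) q else 0) * l ^ p * m ^ q)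
      + (\<Sum>p\<le>n. u p * l ^ p) * (\<Sum>q\<le>n. h q * m ^ q)"
    unfolding bracket1_coeff_def sum_product
    by (simp add: sum.distrib sum_distrib_left algebra_simps)
  also note divdiff_coeff_shift_sum
  also have "(\<Sum>p<n. \<Sum>q<n. divdiff_coeff n f g p q * l ^ p * m ^ q) =
     ((\<Sum>a\<le>n. f a * l ^ a) * (\<Sum>b\<le>n. g b * m ^ b) - (\<Sum>a\<le>n. f a * m ^ a) * (\<Sum>b\<le>n. g b * l ^ b)) / (l - m)"
    using divdiff_coeff_sum[of l m n f g] lm by (simp add: eq_divide_eq mult.commute)
  finally show ?thesis by simp
qed

lemma bracket1_coeff_entry_sum:
  fixes l m :: complex
  assumes "l \<noteq> m" "1 \<le> n" and "k1 * c4 + k2 * c5 = 0"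
    and "\<And>q. q < n \<Longrightarrow> s * (c1 * entry_coeff n c2 e2 x q - entry_coeff n c1 e1 x q * c2)
      + c3 * (k1 * entry_coeff n c4 e4 x q + k2 * entry_coeff n c5 e5 x q) = 0"
  shows "(\<Sum>p<n. \<Sum>q<n. bracket1_coeff n s (entry_coeff n c1 e1 x) (entry_coeff n c2 e2 x)
        (entry_coeff n c3 e3 x) (\<lambda>q. k1 * entry_coeff n c4 e4 x q + k2 * entry_coeff n c5 e5 x q) p q
        * l ^ p * m ^ q)
    = s * l / (l - m) * (entry n c1 e1 x l * entry n c2 e2 x m - entry n c1 e1 x m * entry n c2 e2 x l)
      + entry n c3 e3 x l * (k1 * entry n c4 e4 x m + k2 * entry n c5 e5 x m)"
proof -
  have "(\<Sum>q\<le>n. (k1 * entry_coeff n c4 e4 x q + k2 * entry_coeff n c5 e5 x q) * m ^ q) =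
      k1 * entry n c4 e4 x m + k2 * entry n c5 e5 x m"
    unfolding entry_eq_coeff_sum by (simp add: sum.distrib sum_distrib_left algebra_simps)
  with assms show ?thesis
    by (simp add: bracket1_coeff_sum entry_eq_coeff_sum[symmetric])
qed

text \<open>A structure given by coefficient tables: \<open>t X Y x p q\<close> is the coefficient of
  \<open>l\<^sup>p m\<^sup>q\<close> in \<open>{X(l), Y(m)}\<close>, prescribed for the pairs in \<open>S\<close> and completed by skew-symmetry.\<close>

definition skew_table :: "(ent \<Rightarrow> ent \<Rightarrow> pt \<Rightarrow> nat \<Rightarrow> nat \<Rightarrow> complex) \<Rightarrow> (ent \<times> ent) set
    \<Rightarrow> ent \<Rightarrow> ent \<Rightarrow> pt \<Rightarrow> nat \<Rightarrow> nat \<Rightarrow> complex" where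
  "skew_table t S X Y x p q =
     (if (X, Y) \<in> S then t X Y x p q else if (Y, X) \<in> S then - t Y X x q p else 0)"

definition table_bivector :: "nat \<Rightarrow> (ent \<Rightarrow> ent \<Rightarrow> pt \<Rightarrow> nat \<Rightarrow> nat \<Rightarrow> complex) \<Rightarrow> (ent \<times> ent) set
    \<Rightarrow> ent \<times> nat \<Rightarrow> ent \<times> nat \<Rightarrow> pt \<Rightarrow> complex" where
  "table_bivector n t S v w x = skew_table t S (fst v) (fst w) x (n - snd v) (n - snd w)"

lemma genbr_table_bivector:
  "genbr n (table_bivector n t S) X Y x l m = (\<Sum>p<n. \<Sum>q<n. skew_table t S X Y x p q * l ^ p * m ^ q)"
proof -
  have "genbr n (table_bivector n t S) X Y x l m =
      (\<Sum>i=1..n. \<Sum>j=1..n. skew_table t S X Y x (n - i) (n - j) * l ^ (n - i) * m ^ (n - j))"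
    unfolding genbr_def table_bivector_def by simp
  also have "\<dots> = (\<Sum>p<n. \<Sum>j=1..n. skew_table t S X Y x p (n - j) * l ^ p * m ^ (n - j))"
    by (rule sum_reverse_index)
  also have "\<dots> = (\<Sum>p<n. \<Sum>q<n. skew_table t S X Y x p q * l ^ p * m ^ q)"
    by (intro sum.cong refl sum_reverse_index)
  finally show ?thesis .
qed

lemma genbr_table_bivector_prescribed:
  "(X, Y) \<in> S \<Longrightarrow> genbr n (table_bivector n t S) X Y x l m = (\<Sum>p<n. \<Sum>q<n. t X Y x p q * l ^ p * m ^ q)"
  by (simp add: genbr_table_bivector skew_table_def)

lemma skew_table_swap:
  assumes "\<And>X Y. (X, Y) \<in> S \<Longrightarrow> (Y, X) \<in> S \<Longrightarrow> X = Y"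
    and "\<And>X x p q. (X, X) \<in> S \<Longrightarrow> t X X x q p = - t X X x p q"
  shows "skew_table t S Y X x q p = - skew_table t S X Y x p q"
proof (cases "(X, Y) \<in> S \<and> (Y, X) \<in> S")
  case True
  then have "X = Y" using assms(1) by blast
  then show ?thesis using True assms(2)[of X x p q] unfolding skew_table_def by simp
qed (auto simp: skew_table_def)

lemma skew_on_table_bivector:
  assumes "\<And>X Y. (X, Y) \<in> S \<Longrightarrow> (Y, X) \<in> S \<Longrightarrow> X = Y"
    and "\<And>X x p q. (X, X) \<in> S \<Longrightarrow> t X X x q p = - t X X x p q"
  shows "skew_on n (table_bivector n t S)"
  unfolding skew_on_def table_bivector_def
proof (intro ballI allI)
  fix v w :: "ent \<times> nat" and x
  show "skew_table t S (fst w) (fst v) x (n - snd w) (n - snd v) =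
      - skew_table t S (fst v) (fst w) x (n - snd v) (n - snd w)"
    using assms by (rule skew_table_swap)
qed

lemma polyfun_table_bivector:
  assumes "\<And>X Y p q. (\<lambda>x. t X Y x p q) \<in> polyfun n"
  shows "table_bivector n t S v w \<in> polyfun n"
proof -
  have "(\<lambda>x. skew_table t S X Y x p q) \<in> polyfun n" for X Y p q
    unfolding skew_table_def
    by (cases "(X, Y) \<in> S"; cases "(Y, X) \<in> S") (auto intro: polyfun_uminus assms polyfun.pf_const)
  then show ?thesis unfolding table_bivector_def by (simp add: eta_contract_eq)
qed

definition sklyanin_pairs :: "(ent \<times> ent) set" where
  "sklyanin_pairs = {(EB,EA), (EC,EA), (EB,EC), (EB,ED), (EC,ED), (EA,ED)}"

definition sklyanin_table :: "nat \<Rightarrow> complex \<Rightarrow> complex \<Rightarrow> complex \<Rightarrow> complex \<Rightarrow> complex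
    \<Rightarrow> ent \<Rightarrow> ent \<Rightarrow> pt \<Rightarrow> nat \<Rightarrow> nat \<Rightarrow> complex" where
  "sklyanin_table n \<eta> \<alpha> \<beta> \<gamma> \<delta> X Y x p q =
    (let A = entry_coeff n \<alpha> EA x; B = entry_coeff n \<beta> EB x; C = entry_coeff n \<gamma> EC x;
         D = entry_coeff n \<delta> ED x
     in case (X, Y) of
       (EB, EA) \<Rightarrow> \<eta> * divdiff_coeff n B A p q
     | (EC, EA) \<Rightarrow> - \<eta> * divdiff_coeff n C A p q
     | (EB, EC) \<Rightarrow> \<eta> * divdiff_coeff n D A p q
     | (EB, ED) \<Rightarrow> - \<eta> * divdiff_coeff n B D p q
     | (EC, ED) \<Rightarrow> \<eta> * divdiff_coeff n C D p q
     | (EA, ED) \<Rightarrow> \<eta> * divdiff_coeff n C B p q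
     | _ \<Rightarrow> 0)"

definition bracket1_pairs :: "(ent \<times> ent) set" where
  "bracket1_pairs = {(EB,EA), (EC,EA), (EB,EC), (EB,ED), (EC,ED), (EA,ED), (ED,ED)}"

definition bracket1_table :: "nat \<Rightarrow> complex \<Rightarrow> complex \<Rightarrow> complex \<Rightarrow> complex \<Rightarrow> complex
    \<Rightarrow> ent \<Rightarrow> ent \<Rightarrow> pt \<Rightarrow> nat \<Rightarrow> nat \<Rightarrow> complex" where
  "bracket1_table n \<eta> \<alpha> \<beta> \<gamma> \<delta> X Y x p q =
    (let A = entry_coeff n \<alpha> EA x; B = entry_coeff n \<beta> EB x; C = entry_coeff n \<gamma> EC x;
         D = entry_coeff n \<delta> ED x
     in case (X, Y) of
       (EB, EA) \<Rightarrow> bracket1_coeff n \<eta> B A A (\<lambda>q. \<eta> * B q + (- \<eta> * \<beta> / \<alpha>) * A q) p q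
     | (EC, EA) \<Rightarrow> bracket1_coeff n (- \<eta>) C A A (\<lambda>q. - \<eta> * C q + \<eta> * \<gamma> / \<alpha> * A q) p q
     | (EB, EC) \<Rightarrow> bracket1_coeff n \<eta> D A A (\<lambda>q. \<eta> * D q + (- \<eta> * \<delta> / \<alpha>) * A q) p q
     | (EB, ED) \<Rightarrow> bracket1_coeff n (- \<eta>) B D A (\<lambda>q. \<eta> * \<beta> / \<alpha> * D q + (- \<eta> * \<delta> / \<alpha>) * B q) p q
     | (EC, ED) \<Rightarrow> bracket1_coeff n \<eta> C D A (\<lambda>q. - \<eta> * \<gamma> / \<alpha> * D q + \<eta> * \<delta> / \<alpha> * C q) p q
     | (EA, ED) \<Rightarrow> bracket1_coeff n \<eta> C B A (\<lambda>q. - \<eta> * \<gamma> / \<alpha> * B q + \<eta> * \<beta> / \<alpha> * C q) p q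
     | (ED, ED) \<Rightarrow> \<eta> * \<gamma> / \<alpha> * (D p * B q - D q * B p) - \<eta> * \<beta> / \<alpha> * (D p * C q - D q * C p)
                    + \<eta> * \<delta> / \<alpha> * (B p * C q - B q * C p)
     | _ \<Rightarrow> 0)"

lemma polyfun_sklyanin_table: "(\<lambda>x. sklyanin_table n \<eta> \<alpha> \<beta> \<gamma> \<delta> X Y x p q) \<in> polyfun n"
  by (induct X; induct Y; simp only: sklyanin_table_def Let_def prod.case ent.case;
      intro polyfun.pf_mult polyfun.pf_const polyfun_divdiff_coeff)

lemma polyfun_bracket1_coeff:
  "(\<lambda>x. bracket1_coeff n s (entry_coeff n c1 e1 x) (entry_coeff n c2 e2 x) (entry_coeff n c3 e3 x)
      (\<lambda>q. k1 * entry_coeff n c4 e4 x q + k2 * entry_coeff n c5 e5 x q) p q) \<in> polyfun n"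
  unfolding bracket1_coeff_def
  by (cases "1 \<le> p")
    (auto intro!: polyfun.pf_add polyfun.pf_mult polyfun.pf_const polyfun_divdiff_coeff polyfun_entry_coeff)

lemma polyfun_bracket1_table: "(\<lambda>x. bracket1_table n \<eta> \<alpha> \<beta> \<gamma> \<delta> X Y x p q) \<in> polyfun n"
  by (induct X; induct Y; simp only: bracket1_table_def Let_def prod.case ent.case;
      intro polyfun_bracket1_coeff polyfun.pf_add polyfun.pf_mult polyfun.pf_const polyfun_diff
      polyfun_entry_coeff)

lemma sklyanin0_table_bivector:
  "sklyanin0 n \<eta> \<alpha> \<beta> \<gamma> \<delta> (table_bivector n (sklyanin_table n \<eta> \<alpha> \<beta> \<gamma> \<delta>) sklyanin_pairs)"
  (is "sklyanin0 n \<eta> \<alpha> \<beta> \<gamma> \<delta> ?Q")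
  unfolding sklyanin0_def Let_def
proof (intro conjI allI impI)
  show "skew_on n ?Q"
    by (rule skew_on_table_bivector) (auto simp: sklyanin_pairs_def)
next
  fix x :: pt and l m :: complex
  assume lm: "l \<noteq> m"
  have listed: "(EB, EA) \<in> sklyanin_pairs" "(EC, EA) \<in> sklyanin_pairs" "(EB, EC) \<in> sklyanin_pairs"
    "(EB, ED) \<in> sklyanin_pairs" "(EC, ED) \<in> sklyanin_pairs" "(EA, ED) \<in> sklyanin_pairs"
    by (simp_all add: sklyanin_pairs_def)
  note table = listed[THEN genbr_table_bivector_prescribed] sklyanin_table_def Let_def prod.case ent.case
  have "genbr n ?Q X X x l m = 0" for X
    by (cases X) (simp_all add: genbr_table_bivector skew_table_def sklyanin_pairs_def)
  then show "genbr n ?Q EA EA x l m = 0" "genbr n ?Q EB EB x l m = 0" "genbr n ?Q EC EC x l m = 0"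
    "genbr n ?Q ED ED x l m = 0" by simp_all
  show "genbr n ?Q EB EA x l m =
      \<eta> / (l - m) * (entry n \<beta> EB x l * entry n \<alpha> EA x m - entry n \<beta> EB x m * entry n \<alpha> EA x l)"
    "genbr n ?Q EC EA x l m =
      - \<eta> / (l - m) * (entry n \<gamma> EC x l * entry n \<alpha> EA x m - entry n \<gamma> EC x m * entry n \<alpha> EA x l)"
    "genbr n ?Q EB EC x l m =
      \<eta> / (l - m) * (entry n \<delta> ED x l * entry n \<alpha> EA x m - entry n \<delta> ED x m * entry n \<alpha> EA x l)"
    "genbr n ?Q EB ED x l m =
      - \<eta> / (l - m) * (entry n \<beta> EB x l * entry n \<delta> ED x m - entry n \<beta> EB x m * entry n \<delta> ED x l)"
    "genbr n ?Q EC ED x l m =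
      \<eta> / (l - m) * (entry n \<gamma> EC x l * entry n \<delta> ED x m - entry n \<gamma> EC x m * entry n \<delta> ED x l)"
    "genbr n ?Q EA ED x l m =
      \<eta> / (l - m) * (entry n \<gamma> EC x l * entry n \<beta> EB x m - entry n \<gamma> EC x m * entry n \<beta> EB x l)"
    unfolding table by (rule divdiff_entry_sum[OF lm])+
qed

lemma skew_on_bracket1_table:
  "skew_on n (table_bivector n (bracket1_table n \<eta> \<alpha> \<beta> \<gamma> \<delta>) bracket1_pairs)"
proof (rule skew_on_table_bivector)
  fix X x p q
  assume "(X, X) \<in> bracket1_pairs"
  then have "X = ED" by (auto simp: bracket1_pairs_def)
  then show "bracket1_table n \<eta> \<alpha> \<beta> \<gamma> \<delta> X X x q p = - bracket1_table n \<eta> \<alpha> \<beta> \<gamma> \<delta> X X x p q"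
    by (simp add: bracket1_table_def Let_def algebra_simps)
qed (auto simp: bracket1_pairs_def)

lemma bracket1_table_DD_sum:
  "(\<Sum>p<n. \<Sum>q<n. bracket1_table n \<eta> \<alpha> \<beta> \<gamma> \<delta> ED ED x p q * l ^ p * m ^ q) =
    \<eta> * \<gamma> / \<alpha> * (entry n \<delta> ED x l * entry n \<beta> EB x m - entry n \<delta> ED x m * entry n \<beta> EB x l)
    - \<eta> * \<beta> / \<alpha> * (entry n \<delta> ED x l * entry n \<gamma> EC x m - entry n \<delta> ED x m * entry n \<gamma> EC x l)
    + \<eta> * \<delta> / \<alpha> * (entry n \<beta> EB x l * entry n \<gamma> EC x m - entry n \<beta> EB x m * entry n \<gamma> EC x l)"
proof -
  let ?b = "entry_coeff n \<beta> EB x" and ?c = "entry_coeff n \<gamma> EC x" and ?d = "entry_coeff n \<delta> ED x"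
  define c where "c p q = \<eta> * \<gamma> / \<alpha> * (?d p * ?b q - ?d q * ?b p)
    - \<eta> * \<beta> / \<alpha> * (?d p * ?c q - ?d q * ?c p) + \<eta> * \<delta> / \<alpha> * (?b p * ?c q - ?b q * ?c p)" for p q
  have "(\<Sum>p<n. \<Sum>q<n. bracket1_table n \<eta> \<alpha> \<beta> \<gamma> \<delta> ED ED x p q * l ^ p * m ^ q) =
      (\<Sum>p<n. \<Sum>q<n. c p q * l ^ p * m ^ q)"
    unfolding bracket1_table_def Let_def prod.case ent.case c_def ..
  also have "\<dots> = (\<Sum>p\<le>n. \<Sum>q\<le>n. c p q * l ^ p * m ^ q)"
    by (rule double_sum_lessThan_eq_atMost) (auto simp: c_def algebra_simps)
  also have "\<dots> = \<eta> * \<gamma> / \<alpha> * (\<Sum>p\<le>n. \<Sum>q\<le>n. (?d p * ?b q - ?d q * ?b p) * l ^ p * m ^ q)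
      - \<eta> * \<beta> / \<alpha> * (\<Sum>p\<le>n. \<Sum>q\<le>n. (?d p * ?c q - ?d q * ?c p) * l ^ p * m ^ q)
      + \<eta> * \<delta> / \<alpha> * (\<Sum>p\<le>n. \<Sum>q\<le>n. (?b p * ?c q - ?b q * ?c p) * l ^ p * m ^ q)"
    unfolding c_def by (simp add: sum.distrib sum_subtractf sum_distrib_left algebra_simps)
  finally show ?thesis
    unfolding entry_eq_coeff_sum wedge_eq_double_sum .
qed

lemma bracket1_table_bivector:
  assumes n: "1 \<le> n" and \<alpha>: "\<alpha> \<noteq> 0"
  shows "bracket1 n \<eta> \<alpha> \<beta> \<gamma> \<delta> (table_bivector n (bracket1_table n \<eta> \<alpha> \<beta> \<gamma> \<delta>) bracket1_pairs)"
  (is "bracket1 n \<eta> \<alpha> \<beta> \<gamma> \<delta> ?Q")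
  unfolding bracket1_def Let_def
proof (intro conjI allI impI)
  show "skew_on n ?Q" by (rule skew_on_bracket1_table)
next
  fix x :: pt and l m :: complex
  assume lm: "l \<noteq> m"
  then have "l - m \<noteq> 0" by simp
  let ?A = "entry n \<alpha> EA x" and ?B = "entry n \<beta> EB x" and ?C = "entry n \<gamma> EC x"
    and ?D = "entry n \<delta> ED x"
  have listed: "(EB, EA) \<in> bracket1_pairs" "(EC, EA) \<in> bracket1_pairs" "(EB, EC) \<in> bracket1_pairs"
    "(EB, ED) \<in> bracket1_pairs" "(EC, ED) \<in> bracket1_pairs" "(EA, ED) \<in> bracket1_pairs"
    "(ED, ED) \<in> bracket1_pairs"
    by (simp_all add: bracket1_pairs_def)
  note table = listed[THEN genbr_table_bivector_prescribed] bracket1_table_def Let_def prod.case ent.case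
  show "genbr n ?Q EA EA x l m = 0" "genbr n ?Q EB EB x l m = 0" "genbr n ?Q EC EC x l m = 0"
    by (simp_all add: genbr_table_bivector skew_table_def bracket1_pairs_def)
  show "genbr n ?Q EB EA x l m = \<eta> / (l - m) * (l * ?B l * ?A m - m * ?B m * ?A l) - \<eta> * \<beta> / \<alpha> * ?A l * ?A m"
    "genbr n ?Q EC EA x l m = - \<eta> / (l - m) * (l * ?C l * ?A m - m * ?C m * ?A l) + \<eta> * \<gamma> / \<alpha> * ?A l * ?A m"
    "genbr n ?Q EB EC x l m = \<eta> / (l - m) * (l * ?D l * ?A m - m * ?D m * ?A l) - \<eta> * \<delta> / \<alpha> * ?A l * ?A m"
    "genbr n ?Q EB ED x l m =
      - \<eta> * l / (l - m) * (?B l * ?D m - ?B m * ?D l) + \<eta> * ?A l * (\<beta> / \<alpha> * ?D m - \<delta> / \<alpha> * ?B m)"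
    "genbr n ?Q EC ED x l m =
      \<eta> * l / (l - m) * (?C l * ?D m - ?C m * ?D l) - \<eta> * ?A l * (\<gamma> / \<alpha> * ?D m - \<delta> / \<alpha> * ?C m)"
    "genbr n ?Q EA ED x l m =
      \<eta> * l / (l - m) * (?C l * ?B m - ?C m * ?B l) - \<eta> * ?A l * (\<gamma> / \<alpha> * ?B m - \<beta> / \<alpha> * ?C m)"
    unfolding table
    by (rule trans[OF bracket1_coeff_entry_sum[OF lm n]];
        use \<alpha> \<open>l - m \<noteq> 0\<close> in \<open>auto simp: field_simps\<close>)+
  show "genbr n ?Q ED ED x l m = \<eta> * \<gamma> / \<alpha> * (?D l * ?B m - ?D m * ?B l)
      - \<eta> * \<beta> / \<alpha> * (?D l * ?C m - ?D m * ?C l) + \<eta> * \<delta> / \<alpha> * (?B l * ?C m - ?B m * ?C l)"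
    unfolding genbr_table_bivector_prescribed[OF listed(7)] by (rule bracket1_table_DD_sum)
qed

lemma skew_on_lincomb:
  assumes "skew_on n P0" "skew_on n P1"
  shows "skew_on n (\<lambda>v w x. a * P0 v w x + b * P1 v w x)"
  unfolding skew_on_def
proof (intro ballI allI)
  fix v w x
  assume "v \<in> coords n" "w \<in> coords n"
  with assms have "P0 w v x = - P0 v w x" "P1 w v x = - P1 v w x"
    unfolding skew_on_def by blast+
  then show "a * P0 w v x + b * P1 w v x = - (a * P0 v w x + b * P1 v w x)"
    by (simp add: algebra_simps)
qed

text \<open>A structure is determined by its generating functions, so any solution of
  \<open>sklyanin0\<close> or \<open>bracket1\<close> coincides with the explicit table solution and is polynomial.\<close>

lemma sklyanin0_polyfun:
  assumes "sklyanin0 n \<eta> \<alpha> \<beta> \<gamma> \<delta> P" "v \<in> coords n" "w \<in> coords n"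
  shows "P v w \<in> polyfun n"
proof -
  have "P v w = table_bivector n (sklyanin_table n \<eta> \<alpha> \<beta> \<gamma> \<delta>) sklyanin_pairs v w"
    using sklyanin0_has_genfun[OF assms(1)] sklyanin0_has_genfun[OF sklyanin0_table_bivector] assms(2,3)
    by (rule has_genfun_unique)
  then show ?thesis using polyfun_table_bivector[OF polyfun_sklyanin_table] by simp
qed

lemma bracket1_polyfun:
  assumes "1 \<le> n" "\<alpha> \<noteq> 0" "bracket1 n \<eta> \<alpha> \<beta> \<gamma> \<delta> P" "v \<in> coords n" "w \<in> coords n"
  shows "P v w \<in> polyfun n"
proof -
  have "P v w = table_bivector n (bracket1_table n \<eta> \<alpha> \<beta> \<gamma> \<delta>) bracket1_pairs v w"
    using bracket1_has_genfun[OF assms(3,2)]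
      bracket1_has_genfun[OF bracket1_table_bivector[OF assms(1,2)] assms(2)] assms(4,5)
    by (rule has_genfun_unique)
  then show ?thesis using polyfun_table_bivector[OF polyfun_bracket1_table] by simp
qed

lemma is_poisson_lincomb:
  assumes "1 \<le> n" "\<alpha> \<noteq> 0" "sklyanin0 n \<eta> \<alpha> \<beta> \<gamma> \<delta> P0" "bracket1 n \<eta> \<alpha> \<beta> \<gamma> \<delta> P1"
  shows "is_poisson n (\<lambda>v w x. a * P0 v w x + b * P1 v w x)"
proof -
  interpret genfun_bivector n "\<lambda>v w x. a * P0 v w x + b * P1 v w x"
    "a * \<eta>" "b * \<eta>" "\<beta> / \<alpha>" "\<gamma> / \<alpha>" "\<delta> / \<alpha>" \<alpha> \<beta> \<gamma> \<delta>
  proof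
    show "(\<lambda>x. a * P0 v w x + b * P1 v w x) \<in> polyfun n" if "v \<in> coords n" "w \<in> coords n" for v w
      using sklyanin0_polyfun[OF assms(3) that] bracket1_polyfun[OF assms(1,2,4) that]
      by (intro polyfun.pf_add polyfun_cmult)
    show "skew_on n (\<lambda>v w x. a * P0 v w x + b * P1 v w x)"
      using assms(3,4) by (intro skew_on_lincomb) (simp_all add: sklyanin0_def bracket1_def)
    show "has_genfun n \<alpha> \<beta> \<gamma> \<delta> (\<lambda>v w x. a * P0 v w x + b * P1 v w x)
        (a * \<eta>) (b * \<eta>) (\<beta> / \<alpha>) (\<gamma> / \<alpha>) (\<delta> / \<alpha>)"
      using sklyanin0_has_genfun[OF assms(3)] bracket1_has_genfun[OF assms(4,2)]
      by (rule has_genfun_lincomb)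
  qed
  show ?thesis by (rule is_poisson)
qed

theorem proposition1:
  fixes n :: nat and \<eta> \<alpha> \<beta> \<gamma> \<delta> :: complex
  assumes "n \<ge> 1" and "\<alpha> \<noteq> 0"
  shows "(\<exists>P0. sklyanin0 n \<eta> \<alpha> \<beta> \<gamma> \<delta> P0) \<and> (\<exists>P1. bracket1 n \<eta> \<alpha> \<beta> \<gamma> \<delta> P1) \<and>
         (\<forall>P0 P1. sklyanin0 n \<eta> \<alpha> \<beta> \<gamma> \<delta> P0 \<longrightarrow> bracket1 n \<eta> \<alpha> \<beta> \<gamma> \<delta> P1 \<longrightarrow>
            (\<forall>a b :: complex. is_poisson n (\<lambda>v w x. a * P0 v w x + b * P1 v w x)))"
proof (intro conjI allI impI)
  show "\<exists>P0. sklyanin0 n \<eta> \<alpha> \<beta> \<gamma> \<delta> P0"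
    by (rule exI, rule sklyanin0_table_bivector)
  show "\<exists>P1. bracket1 n \<eta> \<alpha> \<beta> \<gamma> \<delta> P1"
    by (rule exI, rule bracket1_table_bivector[OF assms])
  show "is_poisson n (\<lambda>v w x. a * P0 v w x + b * P1 v w x)"
    if "sklyanin0 n \<eta> \<alpha> \<beta> \<gamma> \<delta> P0" "bracket1 n \<eta> \<alpha> \<beta> \<gamma> \<delta> P1" for P0 P1 a b
    using assms that by (rule is_poisson_lincomb)
qed

end
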